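(* Let $n\ge2$, $R>0$ and $S_R:=\{x=(x',x_n): x'\in\mathbb{R}^{n-1},\ 0<x_n<2R\}$. For all $u\in C_c^\infty(S_R)$, all $s\ge 1$ and all $\gamma>1$, $$\int_{S_R}\frac{|\nabla u|}{d^{s-1}}\,dx\ \ge\ (s-1)\int_{S_R}\frac{|u|}{d^s}\,dx+\frac{C}{R^{s-1}}\int_{S_R}\frac{|u|}{d}\,X^\gamma\!\Big(\frac{d}{R}\Big)\,dx$$ holds with a constant $C\ge\gamma-1$. The last term is optimal in the sense that if $\gamma=1$ there is no positive constant $C$ such that this inequality holds for all $u\in C_c^\infty(S_R)$.
   Context: $d(x):=\operatorname{dist}(x,\mathbb{R}^n\setminus S_R)$, and $X(t):=(1-\log t)^{-1}$ for $t\in(0,1]$. *)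

theory Defs
  imports "HOL-Analysis.Analysis"
begin

text \<open>Points of R^n are written x = (x', x_n) with x' in R^(n-1) = real^'m and x_n real.\<close>

definition strip :: "real \<Rightarrow> ((real^'m) \<times> real) set" where
  "strip R = {x. 0 < snd x \<and> snd x < 2 * R}"

definition dS :: "real \<Rightarrow> (real^'m) \<times> real \<Rightarrow> real" where
  "dS R x = infdist x (- strip R)"

definition Xf :: "real \<Rightarrow> real" where
  "Xf t = 1 / (1 - ln t)"

definition grad :: "('a::euclidean_space \<Rightarrow> real) \<Rightarrow> 'a \<Rightarrow> 'a" where
  "grad f x = (\<Sum>b\<in>Basis. frechet_derivative f (at x) b *\<^sub>R b)"

fun Ck_on :: "nat \<Rightarrow> 'a::euclidean_space set \<Rightarrow> ('a \<Rightarrow> real) \<Rightarrow> bool" where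
  "Ck_on 0 U f = continuous_on U f"
| "Ck_on (Suc k) U f = (f differentiable_on U \<and>
      (\<forall>b\<in>Basis. Ck_on k U (\<lambda>x. frechet_derivative f (at x) b)))"

definition smooth_on :: "'a::euclidean_space set \<Rightarrow> ('a \<Rightarrow> real) \<Rightarrow> bool" where
  "smooth_on U f = (\<forall>k. Ck_on k U f)"

text \<open>C_c^infinity(S_R): smooth functions on R^n whose support is compact and contained in S_R
  (equivalently, compactly supported smooth functions on S_R extended by zero).\<close>
definition Cc_inf :: "real \<Rightarrow> ((real^'m) \<times> real \<Rightarrow> real) set" where
  "Cc_inf R = {u. smooth_on UNIV u \<and> compact (closure {x. u x \<noteq> 0})
                  \<and> closure {x. u x \<noteq> 0} \<subseteq> strip R}"

definition ineqD :: "real \<Rightarrow> real \<Rightarrow> real \<Rightarrow> real \<Rightarrow> ((real^'m) \<times> real \<Rightarrow> real) \<Rightarrow> bool" where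
  "ineqD R s \<gamma> C u \<longleftrightarrow>
     integral (strip R) (\<lambda>x. norm (grad u x) / dS R x powr (s - 1))
     \<ge> (s - 1) * integral (strip R) (\<lambda>x. \<bar>u x\<bar> / dS R x powr s)
       + C / R powr (s - 1) *
         integral (strip R) (\<lambda>x. \<bar>u x\<bar> / dS R x * Xf (dS R x / R) powr \<gamma>)"

end

theory Submission
  imports Defs "HOL-Real_Asymp.Real_Asymp"
begin

text \<open>
  For \<open>\<gamma> > 1\<close>, Fubini reduces the inequality to vertical segments \<open>[c, d] \<subseteq> (0, 2R)\<close> at whose
  ends \<open>u\<close> vanishes, and the reflection \<open>t \<mapsto> 2R - t\<close> further to \<open>[c, R]\<close>, where \<open>d(t) = t\<close>.
  There the potential \<open>V(t) = - t^(1-s) + R^(1-s) X(t/R)^(\<gamma>-1)\<close> satisfies \<open>V(R) = 0\<close>,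
  \<open>- V \<le> t^(1-s)\<close> and \<open>V' = W = (s-1) t^(-s) + (\<gamma>-1) R^(1-s) X(t/R)^\<gamma> / t \<ge> 0\<close>. With
  \<open>F(t)\<close> the integral of \<open>|f'|\<close> over \<open>[c, t]\<close>, integrating \<open>|f| W \<le> F W\<close> by parts gives
  \<open>\<integral> |f| W \<le> \<integral> |f'| t^(1-s)\<close>, which is the claim with \<open>C = \<gamma> - 1\<close>.

  For \<open>\<gamma> = 1\<close> test with \<open>u(x', x_n) = \<phi>(x') \<psi>(x_n)\<close>, where \<open>\<psi>\<close> is a smooth plateau supported in
  \<open>[a, 2R - a]\<close> and equal to \<open>1\<close> on \<open>[2a, 2R - 2a]\<close>, and \<open>\<phi>\<close> is a cutoff equal to \<open>1\<close> on
  \<open>|x'| \<le> L\<close>. In the vertical direction \<open>\<integral> |\<psi>'| d^(1-s) - (s-1) \<integral> \<psi> d^(-s) = 2 R^(1-s)\<close>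
  exactly, whereas \<open>\<integral> \<psi> X(d/R) / d \<ge> log (1 - log (2a/R))\<close> is unbounded as \<open>a \<rightarrow> 0\<close>; the
  horizontal derivative of \<open>\<phi>\<close> contributes only \<open>O(1/L)\<close> relative to \<open>\<integral> \<phi>\<close>. Taking \<open>a\<close>
  small and then \<open>L\<close> large contradicts every \<open>C > 0\<close>.
\<close>

section \<open>Smoothness of composite functions\<close>

lemma Ck_on_Suc_imp: "Ck_on (Suc k) UNIV f \<Longrightarrow> Ck_on k UNIV f"
  by (induction k arbitrary: f) (auto intro: differentiable_imp_continuous_on)

lemma frechet_derivative_apply_eq:
  assumes "\<And>x. (f has_derivative f' x) (at x)"
  shows "(\<lambda>x. frechet_derivative f (at x) b) = (\<lambda>x. f' x b)"
  using assms frechet_derivative_at by metis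

lemma differentiable_on_UNIV_has_derivative:
  "f differentiable_on UNIV \<Longrightarrow> (f has_derivative frechet_derivative f (at x)) (at x)"
  by (simp add: differentiable_on_def frechet_derivative_works)

lemma Ck_on_const: "Ck_on k UNIV (\<lambda>x. c)"
proof (induction k arbitrary: c)
  case 0 then show ?case by simp
next
  case (Suc k)
  have "(\<lambda>x. frechet_derivative (\<lambda>x. c) (at x) b) = (\<lambda>x. 0)" for b :: 'a
    by (rule frechet_derivative_apply_eq[of _ "\<lambda>x h. 0", simplified]) simp
  then show ?case using Suc by simp
qed

lemma Ck_on_add: "Ck_on k UNIV f \<Longrightarrow> Ck_on k UNIV g \<Longrightarrow> Ck_on k UNIV (\<lambda>x. f x + g x)"
proof (induction k arbitrary: f g)
  case 0 then show ?case by (simp add: continuous_on_add)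
next
  case (Suc k)
  have df: "f differentiable_on UNIV" and dg: "g differentiable_on UNIV" using Suc.prems by auto
  have "(\<lambda>x. frechet_derivative (\<lambda>x. f x + g x) (at x) b) =
     (\<lambda>x. frechet_derivative f (at x) b + frechet_derivative g (at x) b)" for b
    by (rule frechet_derivative_apply_eq)
       (intro has_derivative_add differentiable_on_UNIV_has_derivative df dg)
  then show ?case using Suc df dg by (auto intro!: differentiable_on_add)
qed

lemma Ck_on_mult: "Ck_on k UNIV f \<Longrightarrow> Ck_on k UNIV g \<Longrightarrow> Ck_on k UNIV (\<lambda>x. f x * g x)"
proof (induction k arbitrary: f g)
  case 0 then show ?case by (simp add: continuous_on_mult)
next
  case (Suc k)
  have df: "f differentiable_on UNIV" and dg: "g differentiable_on UNIV" using Suc.prems by auto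
  have "(\<lambda>x. frechet_derivative (\<lambda>x. f x * g x) (at x) b) =
     (\<lambda>x. f x * frechet_derivative g (at x) b + frechet_derivative f (at x) b * g x)" for b
    by (rule frechet_derivative_apply_eq)
       (intro has_derivative_mult differentiable_on_UNIV_has_derivative df dg)
  moreover have "Ck_on k UNIV f" "Ck_on k UNIV g" using Ck_on_Suc_imp Suc.prems by blast+
  ultimately show ?case using Suc.prems
    by (auto intro!: differentiable_on_mult Ck_on_add Suc.IH)
qed

lemma Ck_on_inverse: "Ck_on k UNIV f \<Longrightarrow> (\<And>x. f x \<noteq> 0) \<Longrightarrow> Ck_on k UNIV (\<lambda>x. 1 / f x)"
proof (induction k arbitrary: f)
  case 0 then show ?case by (auto intro!: continuous_on_divide continuous_intros)
next
  case (Suc k)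
  have df: "f differentiable_on UNIV" using Suc.prems by auto
  have d: "(\<lambda>x. frechet_derivative (\<lambda>x. 1 / f x) (at x) b) =
     (\<lambda>x. (- 1) * (frechet_derivative f (at x) b * ((1 / f x) * (1 / f x))))" for b
    apply (rule frechet_derivative_apply_eq)
    apply (rule has_derivative_eq_rhs)
     apply (rule has_derivative_divide[OF has_derivative_const differentiable_on_UNIV_has_derivative[OF df]])
    using Suc.prems(2) apply simp
    using Suc.prems(2) by (auto simp: field_simps power2_eq_square)
  have "(\<lambda>x. 1 / f x) differentiable_on UNIV"
    using df Suc.prems(2) unfolding differentiable_on_def by (auto intro!: differentiable_divide)
  moreover have "Ck_on k UNIV (\<lambda>x. 1 / f x)" using Ck_on_Suc_imp Suc by blast
  moreover have "Ck_on k UNIV (\<lambda>x. frechet_derivative f (at x) b)" if "b \<in> Basis" for b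
    using Suc.prems(1) that by simp
  ultimately show ?case unfolding Ck_on.simps d by (intro conjI ballI Ck_on_mult Ck_on_const) auto
qed

lemma Ck_on_compose:
  fixes h :: "real \<Rightarrow> real" and f :: "'a::euclidean_space \<Rightarrow> real"
  shows "Ck_on k UNIV h \<Longrightarrow> Ck_on k UNIV f \<Longrightarrow> Ck_on k UNIV (\<lambda>x. h (f x))"
proof (induction k arbitrary: h f)
  case 0
  then have "continuous_on UNIV f" "continuous_on UNIV h" by simp_all
  then show ?case by (simp add: continuous_on_compose2[of UNIV])
next
  case (Suc k)
  have dh: "h differentiable_on UNIV" and df: "f differentiable_on UNIV" using Suc.prems by auto
  have "(\<lambda>x. frechet_derivative (\<lambda>x. h (f x)) (at x) b) =
     (\<lambda>x. frechet_derivative h (at (f x)) 1 * frechet_derivative f (at x) b)" for b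
  proof (rule frechet_derivative_apply_eq)
    fix x
    have lin: "linear (frechet_derivative h (at (f x)))"
      using differentiable_on_UNIV_has_derivative[OF dh] has_derivative_linear by blast
    have "((h o f) has_derivative (frechet_derivative h (at (f x)) o frechet_derivative f (at x))) (at x)"
      by (rule diff_chain_at[OF differentiable_on_UNIV_has_derivative[OF df]
            differentiable_on_UNIV_has_derivative[OF dh]])
    moreover have "frechet_derivative h (at (f x)) o frechet_derivative f (at x) =
       (\<lambda>b. frechet_derivative h (at (f x)) 1 * frechet_derivative f (at x) b)"
    proof
      fix b
      show "(frechet_derivative h (at (f x)) o frechet_derivative f (at x)) b =
         frechet_derivative h (at (f x)) 1 * frechet_derivative f (at x) b"
        using linear_cmul[OF lin, of "frechet_derivative f (at x) b" 1] by (simp add: mult.commute)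
    qed
    ultimately show "((\<lambda>x. h (f x)) has_derivative
        (\<lambda>b. frechet_derivative h (at (f x)) 1 * frechet_derivative f (at x) b)) (at x)"
      by (simp add: o_def)
  qed
  moreover have "(\<lambda>x. h (f x)) differentiable_on UNIV"
  proof -
    have "(h o f) differentiable (at x)" for x
      by (rule differentiable_chain_at) (use df dh in \<open>simp_all add: differentiable_on_def\<close>)
    then show ?thesis unfolding differentiable_on_def o_def by simp
  qed
  moreover have "Ck_on k UNIV (\<lambda>y. frechet_derivative h (at y) 1)"
    using Suc.prems(1) by (simp add: Basis_real_def)
  then have "Ck_on k UNIV (\<lambda>x. frechet_derivative h (at (f x)) 1)"
    using Suc.IH Ck_on_Suc_imp[OF Suc.prems(2)] by blast
  ultimately show ?case using Suc.prems(2) by (auto intro!: Ck_on_mult)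
qed

lemma Ck_on_inner_const: "Ck_on k UNIV (\<lambda>x. x \<bullet> c)"
proof (induction k)
  case 0 then show ?case by (auto intro!: continuous_intros)
next
  case (Suc k)
  have d: "((\<lambda>x. x \<bullet> c) has_derivative (\<lambda>h. h \<bullet> c)) (at x)" for x
    by (auto intro!: derivative_eq_intros)
  then have "(\<lambda>x. frechet_derivative (\<lambda>x. x \<bullet> c) (at x) b) = (\<lambda>x. b \<bullet> c)" for b
    by (rule frechet_derivative_apply_eq)
  moreover have "(\<lambda>x. x \<bullet> c) differentiable_on UNIV"
    using d unfolding differentiable_on_def differentiable_def by blast
  ultimately show ?case by (simp add: Ck_on_const)
qed

lemma Ck_on_inner_self: "Ck_on k UNIV (\<lambda>x::'a::euclidean_space. x \<bullet> x)"
proof (cases k)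
  case 0 then show ?thesis by (simp add: continuous_on_inner continuous_on_id)
next
  case (Suc k')
  have d: "((\<lambda>x. x \<bullet> x) has_derivative (\<lambda>h. 2 * (x \<bullet> h))) (at x)" for x :: 'a
    by (rule has_derivative_eq_rhs, rule has_derivative_inner[OF has_derivative_ident has_derivative_ident])
       (simp add: inner_commute)
  then have "(\<lambda>x. frechet_derivative (\<lambda>x. x \<bullet> x) (at x) b) = (\<lambda>x. 2 * (x \<bullet> b))" for b :: 'a
    by (rule frechet_derivative_apply_eq)
  moreover have "(\<lambda>x::'a. x \<bullet> x) differentiable_on UNIV"
    unfolding differentiable_on_def differentiable_def using d by blast
  moreover have "Ck_on k' UNIV (\<lambda>x::'a. 2 * (x \<bullet> b))" for b
    by (rule Ck_on_mult[OF Ck_on_const Ck_on_inner_const])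
  ultimately show ?thesis unfolding Suc by simp
qed

lemma Ck_on_Suc_real:
  fixes h h' :: "real \<Rightarrow> real"
  assumes "\<And>x. (h has_real_derivative h' x) (at x)" and "Ck_on k UNIV h'"
  shows "Ck_on (Suc k) UNIV h"
proof -
  have "(h has_derivative (\<lambda>c. h' x * c)) (at x)" for x
    using assms(1)[of x] by (simp add: has_field_derivative_def)
  then have "(\<lambda>x. frechet_derivative h (at x) 1) = h'"
    using frechet_derivative_apply_eq[of h "\<lambda>x c. h' x * c" 1] by simp
  moreover have "h differentiable_on UNIV"
    unfolding differentiable_on_def using assms(1) real_differentiable_def by blast
  ultimately show ?thesis using assms(2) by (simp add: Basis_real_def)
qed

section \<open>A smooth step function\<close>

definition flat_exp :: "nat \<Rightarrow> real \<Rightarrow> real" where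
  "flat_exp n t = (if 0 < t then exp (- 1 / t) / t ^ n else 0)"

lemma flat_exp_nonneg: "flat_exp n t \<ge> 0"
  by (simp add: flat_exp_def)

lemma flat_exp_pos: "t > 0 \<Longrightarrow> flat_exp n t > 0"
  by (simp add: flat_exp_def)

lemma flat_exp_eq_0: "t \<le> 0 \<Longrightarrow> flat_exp n t = 0"
  by (simp add: flat_exp_def)

lemma flat_exp_tendsto_0: "(flat_exp n \<longlongrightarrow> 0) (at 0)"
proof -
  have "((\<lambda>t. exp (- 1 / t) / t ^ n) \<longlongrightarrow> 0) (at_right (0::real))"
    by real_asymp
  then have "(flat_exp n \<longlongrightarrow> 0) (at_right 0)"
    by (rule Lim_transform_eventually) (auto simp: flat_exp_def intro: eventually_at_rightI[of 0 1])
  moreover have "(flat_exp n \<longlongrightarrow> 0) (at_left 0)"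
    by (rule Lim_transform_eventually[OF tendsto_const])
       (auto simp: flat_exp_def intro: eventually_at_leftI[of "-1"])
  ultimately show ?thesis by (simp add: filterlim_at_split)
qed

lemma flat_exp_has_real_derivative_pos:
  assumes t: "t > 0"
  shows "((\<lambda>t. exp (- 1 / t) / t ^ n) has_real_derivative
     exp (- 1 / t) / t ^ (n + 2) - real n * (exp (- 1 / t) / t ^ (n + 1))) (at t)"
proof -
  have "((\<lambda>t. exp (- 1 / t) / t ^ n) has_real_derivative
    ((exp (- 1 / t) * (1 / t^2)) * t^n - real n * t ^ (n - 1) * exp (- 1 / t)) / (t^n)\<^sup>2) (at t)"
    using t by (auto intro!: derivative_eq_intros simp: power2_eq_square)
  moreover have "((exp (- 1 / t) * (1 / t^2)) * t^n - real n * t ^ (n - 1) * exp (- 1 / t)) / (t^n)\<^sup>2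
     = exp (- 1 / t) / t ^ (n + 2) - real n * (exp (- 1 / t) / t ^ (n + 1))"
    using t by (cases n) (simp_all add: field_simps power2_eq_square)
  ultimately show ?thesis by simp
qed

lemma flat_exp_has_real_derivative:
  "(flat_exp n has_real_derivative (flat_exp (n + 2) t - real n * flat_exp (n + 1) t)) (at t)"
proof (cases t "0 :: real" rule: linorder_cases)
  case greater
  have v: "flat_exp (n + 2) t - real n * flat_exp (n + 1) t
      = exp (- 1 / t) / t ^ (n + 2) - real n * (exp (- 1 / t) / t ^ (n + 1))"
    using greater by (simp add: flat_exp_def)
  show ?thesis unfolding v
    by (rule has_field_derivative_transform_within_open[OF flat_exp_has_real_derivative_pos[OF greater],
        of "{0<..}"]) (use greater in \<open>auto simp: flat_exp_def\<close>)
next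
  case less
  then have v: "flat_exp (n + 2) t - real n * flat_exp (n + 1) t = 0"
    by (simp add: flat_exp_def)
  show ?thesis unfolding v
    by (rule has_field_derivative_transform_within_open[OF DERIV_const[of 0], of "{..<0}"])
       (use less in \<open>auto simp: flat_exp_def\<close>)
next
  case equal
  have "((\<lambda>y. (flat_exp n y - flat_exp n 0) / (y - 0)) \<longlongrightarrow> 0) (at 0)"
    by (rule Lim_transform_eventually[OF flat_exp_tendsto_0[of "n + 1"]])
       (auto simp: flat_exp_def eventually_at_filter)
  then show ?thesis
    using equal has_field_derivative_iff by (fastforce simp: flat_exp_def)
qed

lemma Ck_on_flat_exp: "Ck_on k UNIV (flat_exp n)"
proof (induction k arbitrary: n)
  case 0
  have "isCont (flat_exp n) x" for x
    using flat_exp_has_real_derivative DERIV_isCont by blast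
  then show ?case by (simp add: continuous_at_imp_continuous_on)
next
  case (Suc k)
  have "Ck_on k UNIV (\<lambda>t. flat_exp (n + 2) t + (- real n) * flat_exp (n + 1) t)"
    by (intro Ck_on_add Ck_on_mult Ck_on_const Suc.IH)
  then show ?case by (intro Ck_on_Suc_real[OF flat_exp_has_real_derivative]) simp
qed

definition smooth_step :: "real \<Rightarrow> real" where
  "smooth_step t = flat_exp 0 t / (flat_exp 0 t + flat_exp 0 (1 - t))"

definition smooth_step' :: "real \<Rightarrow> real" where
  "smooth_step' t = (flat_exp 2 t * flat_exp 0 (1 - t) + flat_exp 0 t * flat_exp 2 (1 - t))
     / (flat_exp 0 t + flat_exp 0 (1 - t))\<^sup>2"

lemma smooth_step_denominator_pos: "flat_exp 0 t + flat_exp 0 (1 - t) > 0"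
  using flat_exp_pos[of t 0] flat_exp_pos[of "1 - t" 0] flat_exp_nonneg[of 0]
  by (cases "t > 0") (auto intro: add_pos_nonneg add_nonneg_pos)

lemma Ck_on_smooth_step: "Ck_on k UNIV smooth_step"
proof -
  have "Ck_on k UNIV (\<lambda>t::real. flat_exp 0 (1 + t \<bullet> (-1)))"
    by (rule Ck_on_compose[OF Ck_on_flat_exp Ck_on_add[OF Ck_on_const Ck_on_inner_const]])
  then have "Ck_on k UNIV (\<lambda>t. flat_exp 0 (1 - t))" by simp
  then have "Ck_on k UNIV (\<lambda>t. 1 / (flat_exp 0 t + flat_exp 0 (1 - t)))"
    using smooth_step_denominator_pos[THEN less_imp_neq[symmetric]]
    by (intro Ck_on_inverse Ck_on_add Ck_on_flat_exp) metis
  from Ck_on_mult[OF Ck_on_flat_exp this] show ?thesis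
    unfolding smooth_step_def by simp
qed

lemma smooth_step_has_real_derivative: "(smooth_step has_real_derivative smooth_step' t) (at t)"
proof -
  have d0: "(flat_exp 0 has_real_derivative flat_exp 2 t) (at t)" for t
    using flat_exp_has_real_derivative[of 0 t] by (simp add: numeral_2_eq_2)
  have d1: "((\<lambda>t. flat_exp 0 (1 - t)) has_real_derivative flat_exp 2 (1 - t) * (-1)) (at t)"
    by (rule DERIV_chain2[OF d0]) (auto intro!: derivative_eq_intros)
  have "(smooth_step has_real_derivative
     (flat_exp 2 t * (flat_exp 0 t + flat_exp 0 (1 - t)) - (flat_exp 2 t + flat_exp 2 (1 - t) * (-1)) * flat_exp 0 t)
       / (flat_exp 0 t + flat_exp 0 (1 - t)) ^ Suc (Suc 0)) (at t)"
    unfolding smooth_step_def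
    by (rule DERIV_quotient[OF d0 DERIV_add[OF d0 d1]]) (use smooth_step_denominator_pos in \<open>metis less_irrefl\<close>)
  then show ?thesis
    unfolding smooth_step'_def by (simp add: algebra_simps power2_eq_square)
qed

lemma smooth_step'_nonneg: "smooth_step' t \<ge> 0"
  unfolding smooth_step'_def by (intro divide_nonneg_nonneg add_nonneg_nonneg mult_nonneg_nonneg flat_exp_nonneg) simp

lemma smooth_step'_eq_0: "t \<le> 0 \<or> 1 \<le> t \<Longrightarrow> smooth_step' t = 0"
  unfolding smooth_step'_def by (auto simp: flat_exp_eq_0)

lemma smooth_step_eq_0: "t \<le> 0 \<Longrightarrow> smooth_step t = 0"
  unfolding smooth_step_def by (simp add: flat_exp_eq_0)

lemma smooth_step_eq_1: "1 \<le> t \<Longrightarrow> smooth_step t = 1"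
  unfolding smooth_step_def using smooth_step_denominator_pos[of t] by (simp add: flat_exp_eq_0)

lemma smooth_step_nonneg: "smooth_step t \<ge> 0"
  unfolding smooth_step_def using smooth_step_denominator_pos[of t] flat_exp_nonneg by simp

lemma continuous_on_smooth_step: "continuous_on S smooth_step"
  using smooth_step_has_real_derivative by (meson DERIV_continuous_on has_field_derivative_at_within)

lemma continuous_on_smooth_step': "continuous_on S smooth_step'"
proof -
  have c: "continuous_on UNIV (flat_exp n)" for n
    using Ck_on_flat_exp[of 0 n] by simp
  have c1: "continuous_on UNIV (\<lambda>t. flat_exp n (1 - t))" for n
    by (rule continuous_on_compose2[OF c[of n]]) (auto intro!: continuous_intros)
  have "continuous_on UNIV smooth_step'"
    unfolding smooth_step'_def
    by (intro continuous_on_divide continuous_on_add continuous_on_mult continuous_on_power c c1)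
       (use smooth_step_denominator_pos in \<open>metis less_irrefl zero_less_power\<close>)
  then show ?thesis by (rule continuous_on_subset) simp
qed

lemma smooth_step'_bounded: "\<exists>M. \<forall>t. smooth_step' t \<le> M"
proof -
  have "compact (smooth_step' ` {0..1})"
    by (rule compact_continuous_image[OF continuous_on_smooth_step']) simp
  then obtain B where B: "\<forall>y\<in>smooth_step' ` {0..1}. norm y \<le> B"
    using compact_imp_bounded bounded_iff by blast
  have "smooth_step' t \<le> max B 0" for t
  proof (cases "t \<in> {0..1}")
    case True
    then have "norm (smooth_step' t) \<le> B" using B by blast
    then show ?thesis by simp
  next
    case False
    then show ?thesis using smooth_step'_eq_0[of t] by auto
  qed
  then show ?thesis by blast
qed

section \<open>The one-dimensional inequality\<close>

lemma Xf_pos: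
  assumes "0 < t" "t \<le> 1"
  shows "Xf t > 0"
proof -
  have "ln t \<le> 0" using assms by simp
  then show ?thesis unfolding Xf_def by simp
qed

lemma Xf_scaled_has_real_derivative:
  assumes R: "R > 0" and t: "0 < t" "t \<le> R"
  shows "((\<lambda>t. Xf (t / R)) has_real_derivative Xf (t / R) ^ 2 / t) (at t)"
proof -
  have "ln (t / R) \<le> 0" using R t by simp
  then have "1 - ln (t / R) \<noteq> 0" by simp
  then have "((\<lambda>t. 1 / (1 - ln (t / R))) has_real_derivative
      (0 * (1 - ln (t / R)) - (- (1 / R / (t / R))) * 1) / (1 - ln (t / R)) ^ 2) (at t)"
    using R t by (auto intro!: derivative_eq_intros simp: power2_eq_square)
  then show ?thesis unfolding Xf_def using R t by (simp add: power2_eq_square field_simps)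
qed

lemma continuous_on_Xf_powr:
  assumes R: "R > 0" and h: "continuous_on S h" and p: "\<And>t. t \<in> S \<Longrightarrow> 0 < h t \<and> h t \<le> R"
  shows "continuous_on S (\<lambda>t. Xf (h t / R) powr g)"
proof -
  have "ln (h t / R) \<le> 0" if "t \<in> S" for t
    using p[OF that] R by simp
  then have "1 - ln (h t / R) \<noteq> 0" if "t \<in> S" for t
    using that by fastforce
  then have "continuous_on S (\<lambda>t. Xf (h t / R))"
    unfolding Xf_def using R p by (intro continuous_intros h) fastforce+
  then show ?thesis
    by (rule continuous_on_powr[OF _ continuous_on_const])
       (use Xf_pos[of "h t / R" for t] p R in \<open>simp add: less_imp_neq[symmetric]\<close>)
qed

definition bdist :: "real \<Rightarrow> real \<Rightarrow> real" where
  "bdist R t = min t (2 * R - t)"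

lemma bdist_reflect: "bdist R (2 * R - t) = bdist R t"
  unfolding bdist_def by simp

lemma continuous_on_bdist: "continuous_on S (bdist R)"
  unfolding bdist_def by (intro continuous_intros)

definition hardy_potential :: "real \<Rightarrow> real \<Rightarrow> real \<Rightarrow> real \<Rightarrow> real" where
  "hardy_potential R s \<gamma> t = - (t powr (1 - s)) + R powr (1 - s) * Xf (t / R) powr (\<gamma> - 1)"

definition hardy_weight :: "real \<Rightarrow> real \<Rightarrow> real \<Rightarrow> real \<Rightarrow> real" where
  "hardy_weight R s \<gamma> t = (s - 1) / t powr s + (\<gamma> - 1) / R powr (s - 1) * (Xf (t / R) powr \<gamma> / t)"

lemma hardy_potential_has_real_derivative:
  assumes R: "R > 0" and t: "0 < t" "t \<le> R"
  shows "(hardy_potential R s \<gamma> has_real_derivative hardy_weight R s \<gamma> t) (at t)"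
proof -
  define X where "X = Xf (t / R)"
  have Xp: "X > 0" unfolding X_def using Xf_pos[of "t/R"] R t by simp
  have "((\<lambda>t. Xf (t / R) powr (\<gamma> - 1)) has_real_derivative
      (\<gamma> - 1) * X powr (\<gamma> - 1 - of_nat 1) * (X ^ 2 / t)) (at t)"
    unfolding X_def by (rule DERIV_fun_powr[OF Xf_scaled_has_real_derivative[OF R t]]) (use Xp X_def in simp)
  then have "(hardy_potential R s \<gamma> has_real_derivative
     - ((1 - s) * t powr (1 - s - 1)) + R powr (1 - s) * ((\<gamma> - 1) * X powr (\<gamma> - 1 - 1) * (X ^ 2 / t))) (at t)"
    unfolding hardy_potential_def
    by (intro DERIV_add DERIV_minus DERIV_cmult has_real_derivative_powr t) simp
  moreover have "- ((1 - s) * t powr (1 - s - 1)) + R powr (1 - s) * ((\<gamma> - 1) * X powr (\<gamma> - 1 - 1) * (X ^ 2 / t))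
      = hardy_weight R s \<gamma> t"
  proof -
    have "X powr (\<gamma> - 1 - 1) * X ^ 2 = X powr \<gamma>"
      using Xp by (simp add: powr_add[symmetric] flip: powr_numeral)
    moreover have "t powr (1 - s - 1) = 1 / t powr s" "R powr (1 - s) = 1 / R powr (s - 1)"
      using t R by (simp_all add: powr_diff powr_minus_divide)
    ultimately show ?thesis
      unfolding hardy_weight_def X_def[symmetric] by (simp add: field_simps flip: add_divide_distrib)
  qed
  ultimately show ?thesis by simp
qed

lemma hardy_potential_R: "R > 0 \<Longrightarrow> hardy_potential R s \<gamma> R = 0"
  unfolding hardy_potential_def Xf_def by simp

lemma hardy_weight_nonneg:
  "R > 0 \<Longrightarrow> 0 < t \<Longrightarrow> s \<ge> 1 \<Longrightarrow> \<gamma> \<ge> 1 \<Longrightarrow> hardy_weight R s \<gamma> t \<ge> 0"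
  unfolding hardy_weight_def by (intro add_nonneg_nonneg mult_nonneg_nonneg divide_nonneg_nonneg) auto

lemma continuous_on_hardy_weight:
  assumes "R > 0" and "0 < c"
  shows "continuous_on {c..R} (hardy_weight R s \<gamma>)"
  unfolding hardy_weight_def using assms
  by (intro continuous_intros continuous_on_Xf_powr) auto

lemma integral_by_parts_vanishing_boundary:
  fixes F V F' V' :: "real \<Rightarrow> real"
  assumes "a \<le> b"
    and F: "\<And>t. t \<in> {a..b} \<Longrightarrow> (F has_real_derivative F' t) (at t within {a..b})"
    and V: "\<And>t. t \<in> {a..b} \<Longrightarrow> (V has_real_derivative V' t) (at t within {a..b})"
    and "continuous_on {a..b} F'" "continuous_on {a..b} V'"
    and "F a * V a = F b * V b"
  shows "integral {a..b} (\<lambda>t. F t * V' t) = - integral {a..b} (\<lambda>t. F' t * V t)"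
proof -
  have "continuous_on {a..b} F" "continuous_on {a..b} V"
    by (rule DERIV_continuous_on[OF F], assumption) (rule DERIV_continuous_on[OF V])
  have "((\<lambda>t. F' t * V t + F t * V' t) has_integral (F b * V b - F a * V a)) {a..b}"
  proof (rule fundamental_theorem_of_calculus[OF \<open>a \<le> b\<close>])
    fix t assume "t \<in> {a..b}"
    from DERIV_mult[OF F[OF this] V[OF this]]
    show "((\<lambda>t. F t * V t) has_vector_derivative F' t * V t + F t * V' t) (at t within {a..b})"
      by (simp add: has_real_derivative_iff_has_vector_derivative mult.commute)
  qed
  then have "integral {a..b} (\<lambda>t. F' t * V t + F t * V' t) = 0"
    using assms(6) by (simp add: integral_unique)
  moreover have "integral {a..b} (\<lambda>t. F' t * V t + F t * V' t)
     = integral {a..b} (\<lambda>t. F' t * V t) + integral {a..b} (\<lambda>t. F t * V' t)"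
    using assms(4,5) \<open>continuous_on {a..b} F\<close> \<open>continuous_on {a..b} V\<close>
    by (intro integral_add integrable_continuous_interval continuous_on_mult)
  ultimately show ?thesis by linarith
qed

lemma abs_le_integral_of_derivative_bound:
  fixes f f' G :: "real \<Rightarrow> real"
  assumes "c \<le> t" and f: "\<And>t. (f has_real_derivative f' t) (at t)" and "f c = 0"
    and "continuous_on {c..t} G" and "\<And>\<tau>. \<tau> \<in> {c..t} \<Longrightarrow> \<bar>f' \<tau>\<bar> \<le> G \<tau>"
  shows "\<bar>f t\<bar> \<le> integral {c..t} G"
proof -
  have "(f' has_integral (f t - f c)) {c..t}"
    using f by (intro fundamental_theorem_of_calculus[OF \<open>c \<le> t\<close>])
       (simp add: has_real_derivative_iff_has_vector_derivative[symmetric] has_field_derivative_at_within)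
  then have "f' integrable_on {c..t}" "f t = integral {c..t} f'"
    using \<open>f c = 0\<close> by (auto simp: integral_unique)
  moreover have "norm (integral {c..t} f') \<le> integral {c..t} G"
    using assms(4,5) \<open>f' integrable_on {c..t}\<close>
    by (intro integral_norm_bound_integral) (auto intro: integrable_continuous_interval)
  ultimately show ?thesis by simp
qed

lemma hardy_half_interval:
  fixes f f' G :: "real \<Rightarrow> real"
  assumes R: "R > 0" and c: "0 < c" "c \<le> R" and s: "s \<ge> 1" and \<gamma>: "\<gamma> \<ge> 1"
    and f: "\<And>t. (f has_real_derivative f' t) (at t)" and "f c = 0"
    and G: "continuous_on {c..R} G" and f'G: "\<And>t. t \<in> {c..R} \<Longrightarrow> \<bar>f' t\<bar> \<le> G t"
  shows "integral {c..R} (\<lambda>t. \<bar>f t\<bar> * hardy_weight R s \<gamma> t) \<le> integral {c..R} (\<lambda>t. G t * t powr (1 - s))"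
proof -
  define F where "F t = integral {c..t} G" for t
  define V where "V = hardy_potential R s \<gamma>"
  define W where "W = hardy_weight R s \<gamma>"
  have F: "(F has_real_derivative G t) (at t within {c..R})" if "t \<in> {c..R}" for t
    unfolding F_def has_real_derivative_iff_has_vector_derivative
    by (rule integral_has_vector_derivative[OF G that])
  have V: "(V has_real_derivative W t) (at t within {c..R})" if "t \<in> {c..R}" for t
    unfolding V_def W_def using hardy_potential_has_real_derivative[OF R, of t] that c
    by (simp add: has_field_derivative_at_within)
  have W: "continuous_on {c..R} W" unfolding W_def by (rule continuous_on_hardy_weight[OF R c(1)])
  have "continuous_on {c..R} F" "continuous_on {c..R} V" "continuous_on {c..R} f"
    by (rule DERIV_continuous_on[OF F], assumption, rule DERIV_continuous_on[OF V], assumption)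
       (rule DERIV_continuous_on, rule has_field_derivative_at_within[OF f])
  have cp: "continuous_on {c..R} (\<lambda>t. t powr (1 - s))"
    using c by (intro continuous_on_powr continuous_on_id continuous_on_const) auto
  have "integral {c..R} (\<lambda>t. \<bar>f t\<bar> * W t) \<le> integral {c..R} (\<lambda>t. F t * W t)"
  proof (rule integral_le)
    fix t assume t: "t \<in> {c..R}"
    have "\<bar>f t\<bar> \<le> F t"
      unfolding F_def using t f'G
      by (intro abs_le_integral_of_derivative_bound[OF _ f \<open>f c = 0\<close>]
            continuous_on_subset[OF G]) auto
    moreover have "W t \<ge> 0" unfolding W_def using R t c s \<gamma> by (intro hardy_weight_nonneg) auto
    ultimately show "\<bar>f t\<bar> * W t \<le> F t * W t" by (rule mult_right_mono)
  qed (use W \<open>continuous_on {c..R} F\<close> \<open>continuous_on {c..R} f\<close> in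
        \<open>auto intro!: integrable_continuous_interval continuous_intros\<close>)
  also have "\<dots> = integral {c..R} (\<lambda>t. G t * - V t)"
    using integral_by_parts_vanishing_boundary[OF c(2) F V G W]
    by (simp add: F_def V_def hardy_potential_R[OF R] integral_neg)
  also have "\<dots> \<le> integral {c..R} (\<lambda>t. G t * t powr (1 - s))"
  proof (rule integral_le)
    fix t assume "t \<in> {c..R}"
    then have "G t \<ge> 0" using f'G[of t] by linarith
    then show "G t * - V t \<le> G t * t powr (1 - s)"
      unfolding V_def hardy_potential_def by (intro mult_left_mono) auto
  qed (use G cp \<open>continuous_on {c..R} V\<close> in \<open>auto intro!: integrable_continuous_interval continuous_intros\<close>)
  finally show ?thesis unfolding W_def .
qed

definition hardy_defect :: "real \<Rightarrow> real \<Rightarrow> real \<Rightarrow> real \<Rightarrow> real \<Rightarrow> real \<Rightarrow> real" where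
  "hardy_defect R s \<gamma> g v r = g / r powr (s - 1) - (s - 1) * (\<bar>v\<bar> / r powr s)
     - (\<gamma> - 1) / R powr (s - 1) * (\<bar>v\<bar> / r * Xf (r / R) powr \<gamma>)"

lemma hardy_defect_eq:
  "r > 0 \<Longrightarrow> hardy_defect R s \<gamma> g v r = g * r powr (1 - s) - \<bar>v\<bar> * hardy_weight R s \<gamma> r"
  unfolding hardy_defect_def hardy_weight_def by (simp add: powr_diff field_simps)

lemma continuous_on_hardy_defect:
  assumes "R > 0" and "continuous_on S g" "continuous_on S v" "continuous_on S r"
    and "\<And>t. t \<in> S \<Longrightarrow> 0 < r t \<and> r t \<le> R"
  shows "continuous_on S (\<lambda>t. hardy_defect R s \<gamma> (g t) (v t) (r t))"
  unfolding hardy_defect_def using assms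
  by (intro continuous_intros continuous_on_Xf_powr) (auto simp: less_imp_neq[symmetric])

lemma integral_reflect_about:
  "integral {a..b} (\<lambda>t. f (c - t)) = integral {c - b..c - a} (f :: real \<Rightarrow> real)"
proof -
  have "integral {a..b} (\<lambda>t. f (c - t)) = integral {- b..- a} (\<lambda>t. f (c + t))"
    using Henstock_Kurzweil_Integration.integral_reflect_real[of "-a" "-b" "\<lambda>t. f (c + t)"] by simp
  also have "\<dots> = integral {c - b..c - a} f"
    using integral_shift_Icc_real[of "-b" "-a" f c] by (simp add: o_def add.commute)
  finally show ?thesis .
qed

lemma hardy_left_interval:
  fixes f f' G :: "real \<Rightarrow> real"
  assumes R: "R > 0" and c: "0 < c" "c \<le> R" and s: "s \<ge> 1" and \<gamma>: "\<gamma> \<ge> 1"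
    and f: "\<And>t. (f has_real_derivative f' t) (at t)" and "f c = 0"
    and G: "continuous_on {c..R} G" and f'G: "\<And>t. t \<in> {c..R} \<Longrightarrow> \<bar>f' t\<bar> \<le> G t"
  shows "0 \<le> integral {c..R} (\<lambda>t. hardy_defect R s \<gamma> (G t) (f t) (bdist R t))"
proof -
  have "continuous_on {c..R} f"
    by (rule DERIV_continuous_on, rule has_field_derivative_at_within[OF f])
  have "integral {c..R} (\<lambda>t. hardy_defect R s \<gamma> (G t) (f t) (bdist R t))
      = integral {c..R} (\<lambda>t. G t * t powr (1 - s) - \<bar>f t\<bar> * hardy_weight R s \<gamma> t)"
    using c by (intro integral_cong) (auto simp: hardy_defect_eq bdist_def)
  also have "\<dots> = integral {c..R} (\<lambda>t. G t * t powr (1 - s)) - integral {c..R} (\<lambda>t. \<bar>f t\<bar> * hardy_weight R s \<gamma> t)"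
    using c G \<open>continuous_on {c..R} f\<close> continuous_on_hardy_weight[OF R c(1)]
    by (intro integral_diff integrable_continuous_interval continuous_intros) auto
  finally show ?thesis
    using hardy_half_interval[OF R c s \<gamma> f \<open>f c = 0\<close> G f'G] by linarith
qed

lemma hardy_interval:
  fixes f f' G :: "real \<Rightarrow> real"
  assumes R: "R > 0" and c: "0 < c" "c \<le> R" and d: "R \<le> d" "d < 2 * R"
    and s: "s \<ge> 1" and \<gamma>: "\<gamma> \<ge> 1"
    and f: "\<And>t. (f has_real_derivative f' t) (at t)" and "f c = 0" "f d = 0"
    and G: "continuous_on {c..d} G" and f'G: "\<And>t. t \<in> {c..d} \<Longrightarrow> \<bar>f' t\<bar> \<le> G t"
  shows "0 \<le> integral {c..d} (\<lambda>t. hardy_defect R s \<gamma> (G t) (f t) (bdist R t))"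
proof -
  define h where "h = (\<lambda>t. hardy_defect R s \<gamma> (G t) (f t) (bdist R t))"
  have "continuous_on {c..d} f"
    by (rule DERIV_continuous_on, rule has_field_derivative_at_within[OF f])
  then have "h integrable_on {c..d}"
    unfolding h_def using R c d G
    by (intro integrable_continuous_interval continuous_on_hardy_defect continuous_on_bdist)
       (auto simp: bdist_def)
  then have split: "integral {c..d} h = integral {c..R} h + integral {R..d} h"
    using c d by (simp add: Henstock_Kurzweil_Integration.integral_combine)
  have "0 \<le> integral {c..R} h"
    unfolding h_def using d G f'G
    by (intro hardy_left_interval[OF R c s \<gamma> f \<open>f c = 0\<close>]) (auto intro: continuous_on_subset)
  moreover have "0 \<le> integral {2 * R - d..R} (\<lambda>t. h (2 * R - t))"
  proof -
    have f_refl: "((\<lambda>t. f (2 * R - t)) has_real_derivative - f' (2 * R - t)) (at t)" for t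
    proof -
      have "((\<lambda>t. 2 * R - t) has_real_derivative - 1) (at t)"
        by (auto intro!: derivative_eq_intros)
      from DERIV_chain2[OF f this] show ?thesis by simp
    qed
    have "continuous_on {2 * R - d..R} (\<lambda>t. G (2 * R - t))"
      using c d by (intro continuous_on_compose2[OF G]) (auto intro!: continuous_intros)
    moreover have "\<bar>- f' (2 * R - t)\<bar> \<le> G (2 * R - t)" if "t \<in> {2 * R - d..R}" for t
      using f'G[of "2 * R - t"] that c d by auto
    ultimately show ?thesis
      unfolding h_def bdist_reflect using d \<open>f d = 0\<close>
      by (intro hardy_left_interval[OF R _ _ s \<gamma> f_refl]) auto
  qed
  ultimately have "0 \<le> integral {c..d} h"
    using split integral_reflect_about[of "2 * R - d" R h "2 * R"] by simp
  then show ?thesis unfolding h_def .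
qed

section \<open>The inequality on the strip\<close>

lemma dS_eq_bdist:
  fixes x :: "(real^'m) \<times> real"
  assumes x: "x \<in> strip R"
  shows "dS R x = bdist R (snd x)"
proof (rule antisym)
  have y: "(fst x, 0) \<in> - strip R" "(fst x, 2 * R) \<in> - strip R" by (simp_all add: strip_def)
  have "dist x (fst x, 0) = snd x" "dist x (fst x, 2 * R) = 2 * R - snd x"
    using x by (cases x, simp add: dist_Pair_Pair dist_real_def strip_def)+
  then show "dS R x \<le> bdist R (snd x)"
    unfolding dS_def bdist_def using infdist_le[OF y(1), of x] infdist_le[OF y(2), of x] by simp
  have ne: "- strip R \<noteq> ({} :: ((real^'m) \<times> real) set)" using y by blast
  show "bdist R (snd x) \<le> dS R x"
    unfolding dS_def infdist_notempty[OF ne]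
  proof (rule cINF_greatest[OF ne])
    fix a :: "(real^'m) \<times> real" assume "a \<in> - strip R"
    then have "snd a \<le> 0 \<or> 2 * R \<le> snd a" by (auto simp: strip_def)
    with x have "bdist R (snd x) \<le> dist (snd x) (snd a)"
      unfolding bdist_def dist_real_def strip_def by auto
    then show "bdist R (snd x) \<le> dist x a" using dist_snd_le[of x a] by linarith
  qed
qed

lemma continuous_on_dS: "continuous_on S (dS R)"
  unfolding dS_def by (intro continuous_intros)

lemma grad_inner_Basis: "b \<in> Basis \<Longrightarrow> grad f x \<bullet> b = frechet_derivative f (at x) b"
  unfolding grad_def by (simp add: inner_sum_left inner_Basis if_distrib cong: if_cong)

lemma grad_eqI:
  assumes "(f has_derivative (\<lambda>h. h \<bullet> v)) (at x)"
  shows "grad f x = v"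
proof -
  have "frechet_derivative f (at x) = (\<lambda>h. h \<bullet> v)" using assms by (metis frechet_derivative_at)
  moreover have "(\<Sum>b\<in>Basis. (b \<bullet> v) *\<^sub>R b) = v"
    using euclidean_representation[of v] by (simp add: inner_commute)
  ultimately show ?thesis unfolding grad_def by simp
qed

lemma grad_eq_0_if_vanishing_near:
  assumes "open S" "x \<in> S" "\<And>y. y \<in> S \<Longrightarrow> f y = 0"
  shows "grad f x = 0"
proof -
  have "(f has_derivative (\<lambda>h. 0)) (at x)"
    using assms by (intro has_derivative_transform_within_open[OF has_derivative_const[of 0]]) auto
  then show ?thesis using grad_eqI[of f "0" x] by simp
qed

lemma continuous_on_grad: "Ck_on (Suc 0) UNIV f \<Longrightarrow> continuous_on UNIV (grad f)"
  unfolding grad_def by (intro continuous_on_sum continuous_on_scaleR continuous_on_const) auto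

lemma Basis_vertical: "((0::'a::euclidean_space), (1::real)) \<in> Basis"
  by (simp add: Basis_prod_def)

lemma vertical_slice_has_real_derivative:
  fixes u :: "('a::euclidean_space) \<times> real \<Rightarrow> real"
  assumes "u differentiable_on UNIV"
  shows "((\<lambda>t. u (y, t)) has_real_derivative frechet_derivative u (at (y, t)) (0, 1)) (at t)"
proof -
  have du: "(u has_derivative frechet_derivative u (at (y, t))) (at (y, t))"
    by (rule differentiable_on_UNIV_has_derivative[OF assms])
  have lin: "linear (frechet_derivative u (at (y, t)))" using du has_derivative_linear by blast
  have "((\<lambda>t. (y, t)) has_derivative (\<lambda>h. (0, h))) (at t)"
    by (auto intro!: derivative_eq_intros)
  from diff_chain_at[OF this du]
  have "((u o (\<lambda>t. (y, t))) has_derivative (frechet_derivative u (at (y, t)) o (\<lambda>h. (0, h)))) (at t)" .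
  moreover have "frechet_derivative u (at (y, t)) o (\<lambda>h. (0, h)) = (\<lambda>h. frechet_derivative u (at (y, t)) (0, 1) * h)"
  proof
    fix h :: real
    have "(0::'a, h) = h *\<^sub>R (0, 1)" by simp
    then show "(frechet_derivative u (at (y, t)) o (\<lambda>h. (0, h))) h = frechet_derivative u (at (y, t)) (0, 1) * h"
      using linear_cmul[OF lin, of h "(0, 1)"] by (simp add: mult.commute)
  qed
  ultimately show ?thesis unfolding has_field_derivative_def o_def by simp
qed

lemma integrable_on_superset_if_continuous_on_cbox:
  fixes f :: "'a::euclidean_space \<Rightarrow> real"
  assumes "continuous_on (cbox a b) f" "\<And>x. x \<notin> cbox a b \<Longrightarrow> f x = 0" "cbox a b \<subseteq> S"
  shows "f integrable_on S" "integral S f = integral (cbox a b) f"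
proof -
  have "(f has_integral integral (cbox a b) f) S"
    using assms by (intro has_integral_on_superset[OF integrable_integral] integrable_continuous) auto
  then show "f integrable_on S" "integral S f = integral (cbox a b) f"
    by (auto simp: integral_unique)
qed

lemma Cc_inf_support_box:
  fixes u :: "(real^'m) \<times> real \<Rightarrow> real"
  assumes R: "R > 0" and u: "u \<in> Cc_inf R"
  obtains p c d where "0 < c" "c \<le> R" "R \<le> d" "d < 2 * R"
    "\<And>x. fst x \<notin> cbox (- p) p \<or> snd x \<le> c \<or> d \<le> snd x \<Longrightarrow> u x = 0 \<and> grad u x = 0"
proof -
  define K where "K = closure {x. u x \<noteq> 0}"
  have K: "compact K" "K \<subseteq> strip R" using u unfolding Cc_inf_def K_def by auto
  have vanish: "u x = 0 \<and> grad u x = 0" if "x \<notin> K" for x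
  proof
    show "u x = 0" using that closure_subset[of "{x. u x \<noteq> 0}"] unfolding K_def by blast
    have "\<And>y. y \<notin> K \<Longrightarrow> u y = 0" using closure_subset[of "{x. u x \<noteq> 0}"] unfolding K_def by blast
    then show "grad u x = 0"
      using compact_imp_closed[OF K(1)] that by (intro grad_eq_0_if_vanishing_near[of "- K"]) auto
  qed
  obtain \<epsilon> where \<epsilon>: "\<epsilon> > 0" "\<And>y. y \<in> K \<Longrightarrow> \<epsilon> \<le> bdist R (snd y)"
  proof (cases "K = {}")
    case True then show ?thesis using that[of 1] by simp
  next
    case False
    have "continuous_on K (\<lambda>y. bdist R (snd y))"
      unfolding bdist_def by (intro continuous_intros)
    then obtain y0 where "y0 \<in> K" "\<And>y. y \<in> K \<Longrightarrow> bdist R (snd y0) \<le> bdist R (snd y)"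
      using continuous_attains_inf[OF K(1) False] by blast
    moreover have "bdist R (snd y0) > 0" using \<open>y0 \<in> K\<close> K(2) unfolding strip_def bdist_def by auto
    ultimately show ?thesis using that by blast
  qed
  obtain p where p: "fst ` K \<subseteq> cbox (- p) p"
    using bounded_subset_cbox_symmetric[OF bounded_fst[OF compact_imp_bounded[OF K(1)]]] by blast
  define c where "c = min \<epsilon> R / 2"
  have "x \<notin> K" if "fst x \<notin> cbox (- p) p \<or> snd x \<le> c \<or> 2 * R - c \<le> snd x" for x
  proof
    assume "x \<in> K"
    moreover have "c < \<epsilon>" unfolding c_def using \<epsilon>(1) R by linarith
    ultimately have "fst x \<in> cbox (- p) p" "c < bdist R (snd x)"
      using p \<epsilon>(2)[of x] by force+
    then show False using that unfolding bdist_def by auto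
  qed
  then show ?thesis
    using \<epsilon>(1) R vanish by (intro that[of c "2 * R - c" p]) (auto simp: c_def)
qed

lemma ineqD_iff_integral_hardy_defect_nonneg:
  fixes u :: "(real^'m) \<times> real \<Rightarrow> real"
  assumes "(\<lambda>x. norm (grad u x) / dS R x powr (s - 1)) integrable_on strip R"
    and "(\<lambda>x. \<bar>u x\<bar> / dS R x powr s) integrable_on strip R"
    and "(\<lambda>x. \<bar>u x\<bar> / dS R x * Xf (dS R x / R) powr \<gamma>) integrable_on strip R"
  shows "ineqD R s \<gamma> (\<gamma> - 1) u \<longleftrightarrow>
    0 \<le> integral (strip R) (\<lambda>x. hardy_defect R s \<gamma> (norm (grad u x)) (u x) (dS R x))"
proof -
  define g1 where "g1 = (\<lambda>x. norm (grad u x) / dS R x powr (s - 1))"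
  define g2 where "g2 = (\<lambda>x. \<bar>u x\<bar> / dS R x powr s)"
  define g3 where "g3 = (\<lambda>x. \<bar>u x\<bar> / dS R x * Xf (dS R x / R) powr \<gamma>)"
  define C where "C = (\<gamma> - 1) / R powr (s - 1)"
  have i: "g1 integrable_on strip R" "g2 integrable_on strip R" "g3 integrable_on strip R"
    using assms unfolding g1_def g2_def g3_def .
  have "integral (strip R) (\<lambda>x. hardy_defect R s \<gamma> (norm (grad u x)) (u x) (dS R x))
    = integral (strip R) (\<lambda>x. g1 x - (s - 1) * g2 x - C * g3 x)"
    by (simp add: hardy_defect_def g1_def g2_def g3_def C_def)
  also have "\<dots> = integral (strip R) g1 - integral (strip R) (\<lambda>x. (s - 1) * g2 x)
      - integral (strip R) (\<lambda>x. C * g3 x)"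
    using i by (simp add: Henstock_Kurzweil_Integration.integral_diff integrable_diff integrable_on_mult_right)
  also have "\<dots> = integral (strip R) g1 - (s - 1) * integral (strip R) g2 - C * integral (strip R) g3"
    using integral_mult[OF i(2), of "s - 1"] integral_mult[OF i(3), of C] by linarith
  finally show ?thesis unfolding ineqD_def g1_def g2_def g3_def C_def by linarith
qed

lemma integral_nonneg_if_nonneg:
  fixes f :: "'a::euclidean_space \<Rightarrow> real"
  assumes "\<And>x. x \<in> S \<Longrightarrow> 0 \<le> f x"
  shows "0 \<le> integral S f"
  using assms integral_nonneg[of f S] by (cases "f integrable_on S") (auto simp: not_integrable_integral)

lemma hardy_vertical_segment:
  fixes u :: "'a::euclidean_space \<times> real \<Rightarrow> real"
  assumes R: "R > 0" and c: "0 < c" "c \<le> R" and d: "R \<le> d" "d < 2 * R"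
    and s: "s \<ge> 1" and \<gamma>: "\<gamma> \<ge> 1"
    and u: "Ck_on (Suc 0) UNIV u" and "u (y, c) = 0" "u (y, d) = 0"
  shows "0 \<le> integral {c..d} (\<lambda>t. hardy_defect R s \<gamma> (norm (grad u (y, t))) (u (y, t)) (bdist R t))"
proof (rule hardy_interval[OF R c d s \<gamma> vertical_slice_has_real_derivative])
  show "u differentiable_on UNIV" using u by simp
  have "continuous_on {c..d} (\<lambda>t. (y, t))" by (intro continuous_intros)
  then show "continuous_on {c..d} (\<lambda>t. norm (grad u (y, t)))"
    by (rule continuous_on_compose2[OF continuous_on_norm[OF continuous_on_grad[OF u]]]) simp
  show "\<bar>frechet_derivative u (at (y, t)) (0, 1)\<bar> \<le> norm (grad u (y, t))" for t
    using Basis_le_norm[OF Basis_vertical, of "grad u (y, t)"]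
      grad_inner_Basis[OF Basis_vertical, of u "(y, t)"] by simp
qed (use assms in auto)

lemma hardy_strip:
  fixes u :: "(real^'m) \<times> real \<Rightarrow> real"
  assumes R: "R > 0" and s: "s \<ge> 1" and \<gamma>: "\<gamma> \<ge> 1" and u: "u \<in> Cc_inf R"
  shows "ineqD R s \<gamma> (\<gamma> - 1) u"
proof -
  obtain c d p where c: "0 < c" "c \<le> R" and d: "R \<le> d" "d < 2 * R"
    and vanish: "\<And>x. fst x \<notin> cbox (- p) p \<or> snd x \<le> c \<or> d \<le> snd x \<Longrightarrow> u x = 0 \<and> grad u x = 0"
    using Cc_inf_support_box[OF R u] by metis
  define B where "B = cbox (- p, c) (p, d)"
  have B_iff: "x \<in> B \<longleftrightarrow> fst x \<in> cbox (- p) p \<and> c \<le> snd x \<and> snd x \<le> d" for x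
    unfolding B_def by (cases x) (simp add: cbox_Pair_iff)
  have BS: "B \<subseteq> strip R" using c d by (auto simp: B_iff strip_def)
  have dS_B: "dS R x = bdist R (snd x)" "0 < dS R x \<and> dS R x \<le> R" if "x \<in> B" for x
    using dS_eq_bdist[of x R] BS that c d by (auto simp: B_iff bdist_def)
  have outside: "u x = 0 \<and> grad u x = 0" if "x \<notin> B" for x
    using that vanish[of x] by (force simp: B_iff)
  have C1: "Ck_on (Suc 0) UNIV u" using u unfolding Cc_inf_def smooth_on_def by blast
  then have cuB: "continuous_on B u" and cgB: "continuous_on B (grad u)"
    using Ck_on_Suc_imp[of 0 u] continuous_on_grad by (auto intro: continuous_on_subset)
  have restrict: "f integrable_on strip R \<and> integral (strip R) f = integral B f"
    if "continuous_on B f" "\<And>x. x \<notin> B \<Longrightarrow> f x = 0" for f :: "(real^'m) \<times> real \<Rightarrow> real"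
    using integrable_on_superset_if_continuous_on_cbox[of _ _ f] that BS unfolding B_def by blast
  have nz: "\<forall>x\<in>B. dS R x powr (s - 1) \<noteq> 0" "\<forall>x\<in>B. dS R x powr s \<noteq> 0" "\<forall>x\<in>B. dS R x \<noteq> 0"
    using dS_B(2) by (metis less_irrefl powr_eq_0_iff)+
  have cX: "continuous_on B (\<lambda>x. Xf (dS R x / R) powr \<gamma>)"
    by (rule continuous_on_Xf_powr[OF R continuous_on_dS dS_B(2)])
  have int: "(\<lambda>x. norm (grad u x) / dS R x powr (s - 1)) integrable_on strip R"
    "(\<lambda>x. \<bar>u x\<bar> / dS R x powr s) integrable_on strip R"
    "(\<lambda>x. \<bar>u x\<bar> / dS R x * Xf (dS R x / R) powr \<gamma>) integrable_on strip R"
    by (rule restrict[THEN conjunct1], intro continuous_intros cuB cgB cX continuous_on_dS nz,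
        simp add: outside)+
  define D where "D = (\<lambda>x. hardy_defect R s \<gamma> (norm (grad u x)) (u x) (dS R x))"
  have cD: "continuous_on B D"
    unfolding D_def
    by (intro continuous_on_hardy_defect[OF R] continuous_intros cuB cgB continuous_on_dS dS_B(2))
  have "integral (strip R) D = integral B D"
    by (rule restrict[THEN conjunct2, OF cD]) (simp add: D_def outside hardy_defect_def)
  also have "\<dots> = integral (cbox (- p) p) (\<lambda>y. integral {c..d} (\<lambda>t. D (y, t)))"
    using cD unfolding B_def by (simp add: integral_prod_continuous)
  also have "0 \<le> \<dots>"
  proof (rule integral_nonneg_if_nonneg)
    fix y assume "y \<in> cbox (- p) p"
    then have "integral {c..d} (\<lambda>t. D (y, t))
        = integral {c..d} (\<lambda>t. hardy_defect R s \<gamma> (norm (grad u (y, t))) (u (y, t)) (bdist R t))"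
      using dS_B(1) by (intro integral_cong) (simp add: D_def B_iff)
    also have "0 \<le> \<dots>"
      using vanish by (intro hardy_vertical_segment[OF R c d s \<gamma> C1]) auto
    finally show "0 \<le> integral {c..d} (\<lambda>t. D (y, t))" .
  qed
  finally have "0 \<le> integral (strip R) D" .
  then show ?thesis
    unfolding ineqD_iff_integral_hardy_defect_nonneg[OF int] D_def .
qed

section \<open>Test functions\<close>

definition plateau :: "real \<Rightarrow> real \<Rightarrow> real \<Rightarrow> real" where
  "plateau a R t = smooth_step ((t - a) / a) * smooth_step ((2 * R - a - t) / a)"

definition plateau' :: "real \<Rightarrow> real \<Rightarrow> real \<Rightarrow> real" where
  "plateau' a R t = smooth_step' ((t - a) / a) / a * smooth_step ((2 * R - a - t) / a)
     - smooth_step ((t - a) / a) * (smooth_step' ((2 * R - a - t) / a) / a)"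

definition cutoff :: "real \<Rightarrow> 'a::euclidean_space \<Rightarrow> real" where
  "cutoff L y = smooth_step (2 - (y \<bullet> y) / L\<^sup>2)"

definition test_fun :: "real \<Rightarrow> real \<Rightarrow> real \<Rightarrow> 'a::euclidean_space \<times> real \<Rightarrow> real" where
  "test_fun L a R x = cutoff L (fst x) * plateau a R (snd x)"

lemma smooth_step_affine_has_real_derivative:
  "((\<lambda>t. smooth_step (p * t + q)) has_real_derivative smooth_step' (p * t + q) * p) (at t)"
  by (rule DERIV_chain2[OF smooth_step_has_real_derivative]) (auto intro!: derivative_eq_intros)

lemma plateau_has_real_derivative:
  assumes "a > 0"
  shows "(plateau a R has_real_derivative plateau' a R t) (at t)"
proof -
  have "(\<lambda>t. (t - a) / a) = (\<lambda>t. (1 / a) * t + (- 1))"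
    "(\<lambda>t. (2 * R - a - t) / a) = (\<lambda>t. (- 1 / a) * t + (2 * R - a) / a)"
    using assms by (auto simp: field_simps)
  then have "((\<lambda>t. smooth_step ((t - a) / a)) has_real_derivative smooth_step' ((t - a) / a) * (1 / a)) (at t)"
    "((\<lambda>t. smooth_step ((2 * R - a - t) / a)) has_real_derivative
       smooth_step' ((2 * R - a - t) / a) * (- 1 / a)) (at t)"
    using smooth_step_affine_has_real_derivative[of "1 / a" "- 1" t]
      smooth_step_affine_has_real_derivative[of "- 1 / a" "(2 * R - a) / a" t]
    by (simp_all add: fun_eq_iff)
  from DERIV_mult[OF this] show ?thesis
    unfolding plateau_def plateau'_def by (simp add: algebra_simps)
qed

lemma plateau_reflect: "plateau a R (2 * R - t) = plateau a R t"
  unfolding plateau_def by (simp add: algebra_simps)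

lemma plateau'_reflect: "plateau' a R (2 * R - t) = - plateau' a R t"
  unfolding plateau'_def by (simp add: algebra_simps)

lemma plateau_nonneg: "plateau a R t \<ge> 0"
  unfolding plateau_def by (simp add: smooth_step_nonneg)

lemma continuous_on_plateau: "a > 0 \<Longrightarrow> continuous_on S (plateau a R)"
  using plateau_has_real_derivative by (meson DERIV_continuous_on has_field_derivative_at_within)

lemma continuous_on_plateau':
  assumes "a > 0"
  shows "continuous_on S (plateau' a R)"
proof -
  have h: "continuous_on S (\<lambda>t. smooth_step (p * t + q))" "continuous_on S (\<lambda>t. smooth_step' (p * t + q))"
    for p q
    by (rule continuous_on_compose2[OF continuous_on_smooth_step], auto intro!: continuous_intros)
       (rule continuous_on_compose2[OF continuous_on_smooth_step'], auto intro!: continuous_intros)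
  have e: "(t - a) / a = (1 / a) * t + (- 1)" "(2 * R - a - t) / a = (- 1 / a) * t + (2 * R - a) / a"
    for t using assms by (simp_all add: field_simps)
  have "\<forall>x\<in>S. a \<noteq> 0" using assms by simp
  then show ?thesis
    unfolding plateau'_def e by (intro continuous_intros h)
qed

context
  fixes a R :: real
  assumes a: "a > 0" and aR: "2 * a \<le> R"
begin

lemma plateau_left:
  assumes "t \<le> R"
  shows "plateau a R t = smooth_step ((t - a) / a)" "plateau' a R t = smooth_step' ((t - a) / a) / a"
proof -
  have "1 \<le> (2 * R - a - t) / a" using a aR assms by (simp add: field_simps)
  then show "plateau a R t = smooth_step ((t - a) / a)" "plateau' a R t = smooth_step' ((t - a) / a) / a"
    unfolding plateau_def plateau'_def by (simp_all add: smooth_step_eq_1 smooth_step'_eq_0)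
qed

lemma plateau_eq_0: "plateau a R a = 0"
  unfolding plateau_def by (simp add: smooth_step_eq_0)

lemma plateau_eq_1: "2 * a \<le> t \<Longrightarrow> t \<le> R \<Longrightarrow> plateau a R t = 1"
  using plateau_left(1)[of t] a by (simp add: smooth_step_eq_1 field_simps)

lemma plateau'_nonneg: "t \<le> R \<Longrightarrow> plateau' a R t \<ge> 0"
  using plateau_left(2)[of t] a by (simp add: smooth_step'_nonneg)

end

lemma Ck_on_test_fun: "Ck_on k UNIV (test_fun L a R :: 'a::euclidean_space \<times> real \<Rightarrow> real)"
proof -
  define e :: "'a \<times> real" where "e = (0, 1)"
  have fst_sq: "fst x \<bullet> fst x = x \<bullet> x + (- 1) * ((x \<bullet> e) * (x \<bullet> e))" for x
    unfolding e_def by (cases x) (simp add: inner_Pair)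
  have snd_eq: "snd x = x \<bullet> e" for x unfolding e_def by (cases x) (simp add: inner_Pair)
  have "Ck_on k UNIV (\<lambda>x::'a \<times> real. 2 + (- 1 / L\<^sup>2) * (x \<bullet> x + (- 1) * ((x \<bullet> e) * (x \<bullet> e))))"
    by (intro Ck_on_add Ck_on_mult Ck_on_const Ck_on_inner_self Ck_on_inner_const)
  then have q: "Ck_on k UNIV (\<lambda>x::'a \<times> real. 2 - (fst x \<bullet> fst x) / L\<^sup>2)"
    unfolding fst_sq by (simp add: field_simps)
  have "Ck_on k UNIV (\<lambda>x::'a \<times> real. smooth_step (2 - (fst x \<bullet> fst x) / L\<^sup>2) *
      (smooth_step ((x \<bullet> e) * (1 / a) + (- 1)) * smooth_step ((2 * R - a) / a + (- 1 / a) * (x \<bullet> e))))"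
    by (intro Ck_on_mult Ck_on_compose[OF Ck_on_smooth_step] q Ck_on_add Ck_on_const Ck_on_inner_const)
  moreover have "(\<lambda>x::'a \<times> real. smooth_step (2 - (fst x \<bullet> fst x) / L\<^sup>2) *
      (smooth_step ((x \<bullet> e) * (1 / a) + (- 1)) * smooth_step ((2 * R - a) / a + (- 1 / a) * (x \<bullet> e))))
      = test_fun L a R"
  proof
    fix x :: "'a \<times> real"
    have "snd x * (1 / a) + (- 1) = (snd x - a) / a \<or> a = 0" by (auto simp: field_simps)
    moreover have "(2 * R - a) / a + (- 1 / a) * snd x = (2 * R - a - snd x) / a"
      by (cases "a = 0") (simp_all add: field_simps)
    ultimately show "smooth_step (2 - (fst x \<bullet> fst x) / L\<^sup>2) *
      (smooth_step ((x \<bullet> e) * (1 / a) + (- 1)) * smooth_step ((2 * R - a) / a + (- 1 / a) * (x \<bullet> e)))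
      = test_fun L a R x"
      unfolding test_fun_def cutoff_def plateau_def snd_eq[symmetric] by (auto simp: smooth_step_eq_0)
  qed
  ultimately show ?thesis by simp
qed

lemma norm_le_if_inner_self_le:
  fixes y :: "'a::real_inner"
  assumes "y \<bullet> y \<le> 2 * L\<^sup>2" "L > 0"
  shows "norm y \<le> 2 * L"
proof -
  have "y \<bullet> y \<le> 4 * L\<^sup>2" using assms(1) zero_le_power2[of L] by linarith
  then have "norm y ^ 2 \<le> (2 * L) ^ 2"
    by (simp add: power2_norm_eq_inner power_mult_distrib)
  then show ?thesis by (rule power2_le_imp_le) (use assms in simp)
qed

lemma test_fun_eq_0:
  assumes "a > 0" "L > 0" and "2 * L\<^sup>2 < fst x \<bullet> fst x \<or> snd x < a \<or> 2 * R - a < snd x"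
  shows "test_fun L a R x = 0"
proof -
  have "2 - (fst x \<bullet> fst x) / L\<^sup>2 \<le> 0 \<or> (snd x - a) / a \<le> 0 \<or> (2 * R - a - snd x) / a \<le> 0"
    using assms by (auto simp: field_simps)
  then show ?thesis
    unfolding test_fun_def cutoff_def plateau_def by (auto simp: smooth_step_eq_0)
qed

lemma test_fun_in_Cc_inf:
  assumes a: "a > 0" and L: "L > 0"
  shows "(test_fun L a R :: (real^'m) \<times> real \<Rightarrow> real) \<in> Cc_inf R"
proof -
  define K :: "((real^'m) \<times> real) set" where
    "K = {x. fst x \<bullet> fst x \<le> 2 * L\<^sup>2} \<inter> {x. a \<le> snd x} \<inter> {x. snd x \<le> 2 * R - a}"
  have "{x. test_fun L a R x \<noteq> 0} \<subseteq> K"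
    unfolding K_def using test_fun_eq_0[OF a L] by force
  moreover have "closed K" unfolding K_def
    by (intro closed_Int closed_Collect_le continuous_intros)
  ultimately have supp: "closure {x. test_fun L a R x \<noteq> 0} \<subseteq> K"
    by (rule closure_minimal)
  have "bounded K"
    unfolding bounded_iff
  proof (intro exI ballI)
    fix x assume x: "x \<in> K"
    have "norm x \<le> norm (fst x) + norm (snd x)" using norm_Pair_le[of "fst x" "snd x"] by simp
    also have "norm (fst x) \<le> 2 * L" using x L unfolding K_def by (intro norm_le_if_inner_self_le) auto
    also have "norm (snd x) \<le> 2 * R + 2 * a" using x a unfolding K_def by auto
    finally show "norm x \<le> 2 * L + (2 * R + 2 * a)" by simp
  qed
  then have "compact (closure {x :: (real^'m) \<times> real. test_fun L a R x \<noteq> 0})"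
    using bounded_subset[OF _ supp] by (simp add: compact_eq_bounded_closed)
  moreover have "K \<subseteq> strip R" unfolding K_def strip_def using a by auto
  ultimately show ?thesis
    unfolding Cc_inf_def smooth_on_def using supp Ck_on_test_fun by blast
qed

lemma cutoff_has_derivative:
  "(cutoff L has_derivative (\<lambda>h. smooth_step' (2 - (y \<bullet> y) / L\<^sup>2) * ((- 2 / L\<^sup>2) * (y \<bullet> h)))) (at y)"
proof -
  have "((\<lambda>y. 2 - (1 / L\<^sup>2) * (y \<bullet> y)) has_derivative (\<lambda>h. 0 - (1 / L\<^sup>2) * (y \<bullet> h + h \<bullet> y))) (at y)"
    by (intro derivative_intros)
  moreover have "(\<lambda>h. 0 - (1 / L\<^sup>2) * (y \<bullet> h + h \<bullet> y)) = (\<lambda>h. (- 2 / L\<^sup>2) * (y \<bullet> h))"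
    by (simp add: inner_commute fun_eq_iff)
  ultimately have "((\<lambda>y. 2 - (y \<bullet> y) / L\<^sup>2) has_derivative (\<lambda>h. (- 2 / L\<^sup>2) * (y \<bullet> h))) (at y)"
    by simp
  from diff_chain_at[OF this smooth_step_has_real_derivative[unfolded has_field_derivative_def]]
  show ?thesis unfolding cutoff_def o_def by simp
qed

lemma grad_test_fun:
  fixes x :: "'a::euclidean_space \<times> real"
  assumes "a > 0"
  shows "grad (test_fun L a R) x =
    ((plateau a R (snd x) * smooth_step' (2 - (fst x \<bullet> fst x) / L\<^sup>2) * (- 2 / L\<^sup>2)) *\<^sub>R fst x,
     cutoff L (fst x) * plateau' a R (snd x))"
proof (rule grad_eqI)
  have d1: "((\<lambda>x. cutoff L (fst x)) has_derivative
      (\<lambda>h. smooth_step' (2 - (fst x \<bullet> fst x) / L\<^sup>2) * ((- 2 / L\<^sup>2) * (fst x \<bullet> fst h)))) (at x)"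
    using diff_chain_at[OF has_derivative_fst[OF has_derivative_ident] cutoff_has_derivative]
    by (simp add: o_def)
  have d2: "((\<lambda>x. plateau a R (snd x)) has_derivative (\<lambda>h. plateau' a R (snd x) * snd h)) (at x)"
    using diff_chain_at[OF has_derivative_snd[OF has_derivative_ident]
        plateau_has_real_derivative[OF assms, unfolded has_field_derivative_def]]
    by (simp add: o_def)
  show "(test_fun L a R has_derivative (\<lambda>h. h \<bullet>
      ((plateau a R (snd x) * smooth_step' (2 - (fst x \<bullet> fst x) / L\<^sup>2) * (- 2 / L\<^sup>2)) *\<^sub>R fst x,
       cutoff L (fst x) * plateau' a R (snd x)))) (at x)"
    unfolding test_fun_def
    by (rule has_derivative_eq_rhs[OF has_derivative_mult[OF d1 d2]])
       (auto simp: inner_Pair_0 inner_prod_def inner_commute algebra_simps fun_eq_iff)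
qed

lemma norm_grad_test_fun_le:
  fixes x :: "'a::euclidean_space \<times> real"
  assumes a: "a > 0" and L: "L > 0" and M: "\<And>t. smooth_step' t \<le> M"
  shows "norm (grad (test_fun L a R) x)
    \<le> 4 * M / L * plateau a R (snd x) + cutoff L (fst x) * \<bar>plateau' a R (snd x)\<bar>"
proof -
  define y where "y = fst x"
  define h where "h = smooth_step' (2 - (y \<bullet> y) / L\<^sup>2)"
  have M0: "M \<ge> 0" using M[of 0] smooth_step'_nonneg[of 0] by linarith
  have "norm ((plateau a R (snd x) * h * (- 2 / L\<^sup>2)) *\<^sub>R y) \<le> 4 * M / L * plateau a R (snd x)"
  proof (cases "y \<bullet> y \<le> 2 * L\<^sup>2")
    case True
    have "norm ((plateau a R (snd x) * h * (- 2 / L\<^sup>2)) *\<^sub>R y) = plateau a R (snd x) * h * (2 / L\<^sup>2) * norm y"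
      using plateau_nonneg smooth_step'_nonneg unfolding h_def by (simp add: abs_mult)
    also have "\<dots> \<le> plateau a R (snd x) * M * (2 / L\<^sup>2) * (2 * L)"
      using M M0 L plateau_nonneg smooth_step'_nonneg norm_le_if_inner_self_le[OF True L]
      unfolding h_def by (intro mult_mono mult_left_mono) auto
    also have "\<dots> = 4 * M / L * plateau a R (snd x)"
      using L by (simp add: power2_eq_square field_simps)
    finally show ?thesis .
  next
    case False
    then have "h = 0" unfolding h_def using L by (intro smooth_step'_eq_0) (simp add: field_simps)
    then show ?thesis using plateau_nonneg M0 L by simp
  qed
  moreover have "norm (cutoff L y * plateau' a R (snd x)) = cutoff L y * \<bar>plateau' a R (snd x)\<bar>"
    unfolding cutoff_def by (simp add: abs_mult smooth_step_nonneg)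
  ultimately show ?thesis
    unfolding grad_test_fun[OF a] y_def[symmetric] h_def[symmetric]
    using norm_Pair_le[of "(plateau a R (snd x) * h * (- 2 / L\<^sup>2)) *\<^sub>R y"
        "cutoff L y * plateau' a R (snd x)"] by linarith
qed


section \<open>Optimality of the remainder for \<open>\<gamma> = 1\<close>\<close>

lemma integral_symmetric_eq_double:
  fixes h :: "real \<Rightarrow> real"
  assumes "a \<le> R" "h integrable_on {a..2 * R - a}" "\<And>t. t \<in> {a..R} \<Longrightarrow> h (2 * R - t) = h t"
  shows "integral {a..2 * R - a} h = 2 * integral {a..R} h"
proof -
  have "integral {a..2 * R - a} h = integral {a..R} h + integral {R..2 * R - a} h"
    using assms(1,2) by (simp add: Henstock_Kurzweil_Integration.integral_combine)
  also have "integral {R..2 * R - a} h = integral {a..R} (\<lambda>t. h (2 * R - t))"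
    using integral_reflect_about[of a R h "2 * R"] by simp
  also have "\<dots> = integral {a..R} h"
    using assms(3) by (rule integral_cong)
  finally show ?thesis by simp
qed

context
  fixes a R s :: real
  assumes a: "a > 0" and aR: "2 * a \<le> R"
begin

lemma bdist_bounds: "t \<in> {a..2 * R - a} \<Longrightarrow> a \<le> bdist R t \<and> bdist R t \<le> R"
  unfolding bdist_def by auto

lemma continuous_on_plateau_weights:
  "continuous_on {a..2 * R - a} (\<lambda>t. plateau a R t / bdist R t powr r)"
  "continuous_on {a..2 * R - a} (\<lambda>t. \<bar>plateau' a R t\<bar> / bdist R t powr r)"
  "continuous_on {a..2 * R - a} (\<lambda>t. plateau a R t / bdist R t * Xf (bdist R t / R) powr 1)"
proof -
  have pos: "\<And>t. t \<in> {a..2 * R - a} \<Longrightarrow> 0 < bdist R t \<and> bdist R t \<le> R"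
    using bdist_bounds a by force
  then have nz: "\<forall>t\<in>{a..2 * R - a}. bdist R t \<noteq> 0" by fastforce
  then have "\<forall>t\<in>{a..2 * R - a}. bdist R t powr r \<noteq> 0" by simp
  moreover have "continuous_on {a..2 * R - a} (\<lambda>t. Xf (bdist R t / R) powr 1)"
    using a aR by (intro continuous_on_Xf_powr continuous_on_bdist pos) auto
  moreover have "continuous_on {a..2 * R - a} (plateau a R)" "continuous_on {a..2 * R - a} (plateau' a R)"
    using continuous_on_plateau continuous_on_plateau' a by auto
  ultimately show
    "continuous_on {a..2 * R - a} (\<lambda>t. plateau a R t / bdist R t powr r)"
    "continuous_on {a..2 * R - a} (\<lambda>t. \<bar>plateau' a R t\<bar> / bdist R t powr r)"
    "continuous_on {a..2 * R - a} (\<lambda>t. plateau a R t / bdist R t * Xf (bdist R t / R) powr 1)"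
    using nz by (auto intro!: continuous_intros continuous_on_bdist)
qed

lemma plateau_hardy_left:
  "((\<lambda>t. \<bar>plateau' a R t\<bar> / bdist R t powr (s - 1) - (s - 1) * (plateau a R t / bdist R t powr s))
     has_integral R powr (1 - s)) {a..R}"
proof -
  have "((\<lambda>t. plateau' a R t * t powr (1 - s) + plateau a R t * ((1 - s) * t powr (1 - s - 1)))
      has_integral (plateau a R R * R powr (1 - s) - plateau a R a * a powr (1 - s))) {a..R}"
  proof (rule fundamental_theorem_of_calculus)
    show "a \<le> R" using a aR by simp
    fix t assume "t \<in> {a..R}"
    then have "t > 0" using a by simp
    have "((\<lambda>t. plateau a R t * t powr (1 - s)) has_real_derivative
        plateau' a R t * t powr (1 - s) + plateau a R t * ((1 - s) * t powr (1 - s - 1))) (at t)"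
        using DERIV_mult[OF plateau_has_real_derivative[OF a] has_real_derivative_powr[OF \<open>t > 0\<close>, of "1 - s"]]
      by (simp add: algebra_simps)
    then show "((\<lambda>t. plateau a R t * t powr (1 - s)) has_vector_derivative
        plateau' a R t * t powr (1 - s) + plateau a R t * ((1 - s) * t powr (1 - s - 1))) (at t within {a..R})"
      by (simp add: has_real_derivative_iff_has_vector_derivative[symmetric] has_field_derivative_at_within)
  qed
  then have "((\<lambda>t. plateau' a R t * t powr (1 - s) + plateau a R t * ((1 - s) * t powr (1 - s - 1)))
      has_integral R powr (1 - s)) {a..R}"
    using plateau_eq_1[OF a aR, of R] plateau_eq_0[OF a aR] aR by simp
  then show ?thesis
  proof (rule has_integral_eq[rotated])
    fix t assume t: "t \<in> {a..R}"
    then have "t > 0" and b: "bdist R t = t" using a unfolding bdist_def by auto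
    have "plateau' a R t \<ge> 0" using plateau'_nonneg[OF a aR] t by simp
    moreover have e: "t powr (1 - s) = 1 / t powr (s - 1)" "t powr (1 - s - 1) = 1 / t powr s"
      using \<open>t > 0\<close> powr_minus_divide[of t "s - 1"] powr_minus_divide[of t s] by simp_all
    moreover have "t powr s > 0" "t powr (s - 1) > 0" using \<open>t > 0\<close> by simp_all
    ultimately show "plateau' a R t * t powr (1 - s) + plateau a R t * ((1 - s) * t powr (1 - s - 1)) =
       \<bar>plateau' a R t\<bar> / bdist R t powr (s - 1) - (s - 1) * (plateau a R t / bdist R t powr s)"
      unfolding e b by (simp add: field_simps)
  qed
qed

lemma plateau_hardy_identity:
  "integral {a..2 * R - a} (\<lambda>t. \<bar>plateau' a R t\<bar> / bdist R t powr (s - 1))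
     - (s - 1) * integral {a..2 * R - a} (\<lambda>t. plateau a R t / bdist R t powr s) = 2 * R powr (1 - s)"
proof -
  define h where "h t = \<bar>plateau' a R t\<bar> / bdist R t powr (s - 1) - (s - 1) * (plateau a R t / bdist R t powr s)"
    for t
  have i1: "(\<lambda>t. \<bar>plateau' a R t\<bar> / bdist R t powr (s - 1)) integrable_on {a..2 * R - a}"
    and i2: "(\<lambda>t. plateau a R t / bdist R t powr s) integrable_on {a..2 * R - a}"
    using continuous_on_plateau_weights(1,2) by (auto intro: integrable_continuous_interval)
  have "integral {a..2 * R - a} h = 2 * integral {a..R} h"
  proof (rule integral_symmetric_eq_double)
    show "h integrable_on {a..2 * R - a}"
      unfolding h_def using i1 i2 by (intro integrable_diff integrable_on_mult_right)
    show "h (2 * R - t) = h t" for t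
      unfolding h_def by (simp add: plateau_reflect plateau'_reflect bdist_reflect)
  qed (use a aR in simp)
  also have "integral {a..R} h = R powr (1 - s)"
    unfolding h_def by (rule integral_unique[OF plateau_hardy_left])
  moreover have "integral {a..2 * R - a} h = integral {a..2 * R - a} (\<lambda>t. \<bar>plateau' a R t\<bar> / bdist R t powr (s - 1))
      - integral {a..2 * R - a} (\<lambda>t. (s - 1) * (plateau a R t / bdist R t powr s))"
    unfolding h_def by (rule Henstock_Kurzweil_Integration.integral_diff[OF i1 integrable_on_mult_right[OF i2]])
  ultimately show ?thesis
    using integral_mult[OF i2, of "s - 1"] by linarith
qed

lemma plateau_weight_integral_nonneg:
  "0 \<le> integral {a..2 * R - a} (\<lambda>t. plateau a R t / bdist R t powr r)"
proof (rule integral_nonneg[OF integrable_continuous_interval[OF continuous_on_plateau_weights(1)]])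
  fix t assume "t \<in> {a..2 * R - a}"
  then have "0 < bdist R t" using bdist_bounds[of t] a by linarith
  then show "0 \<le> plateau a R t / bdist R t powr r" by (simp add: plateau_nonneg)
qed

lemma plateau_log_integral_ge:
  "ln (1 - ln (2 * a / R)) \<le> integral {a..2 * R - a} (\<lambda>t. plateau a R t / bdist R t * Xf (bdist R t / R) powr 1)"
proof -
  have R: "R > 0" using a aR by simp
  have "((\<lambda>t. Xf (t / R) / t) has_integral (ln (Xf (R / R)) - ln (Xf (2 * a / R)))) {2 * a..R}"
  proof (rule fundamental_theorem_of_calculus[OF aR])
    fix t assume "t \<in> {2 * a..R}"
    then have t: "0 < t" "t \<le> R" and X: "Xf (t / R) > 0" using a Xf_pos[of "t / R"] by auto
    from DERIV_chain2[OF DERIV_ln_divide[OF X] Xf_scaled_has_real_derivative[OF R t]]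
    show "((\<lambda>t. ln (Xf (t / R))) has_vector_derivative Xf (t / R) / t) (at t within {2 * a..R})"
      using X by (simp add: has_real_derivative_iff_has_vector_derivative[symmetric]
          has_field_derivative_at_within power2_eq_square)
  qed
  moreover have "ln (Xf (R / R)) - ln (Xf (2 * a / R)) = ln (1 - ln (2 * a / R))"
  proof -
    have "ln (2 * a / R) \<le> 0" using a aR by simp
    then show ?thesis unfolding Xf_def using R by (simp add: ln_div)
  qed
  moreover have "integral {2 * a..R} (\<lambda>t. plateau a R t / bdist R t * Xf (bdist R t / R) powr 1)
      = integral {2 * a..R} (\<lambda>t. Xf (t / R) / t)"
  proof (rule integral_cong)
    fix t assume t: "t \<in> {2 * a..R}"
    then have "bdist R t = t" "plateau a R t = 1" "Xf (t / R) > 0"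
      using a plateau_eq_1[OF a aR] Xf_pos[of "t / R"] unfolding bdist_def by auto
    then show "plateau a R t / bdist R t * Xf (bdist R t / R) powr 1 = Xf (t / R) / t" by simp
  qed
  moreover have "integral {2 * a..R} (\<lambda>t. plateau a R t / bdist R t * Xf (bdist R t / R) powr 1)
      \<le> integral {a..2 * R - a} (\<lambda>t. plateau a R t / bdist R t * Xf (bdist R t / R) powr 1)"
  proof (rule integral_subset_le)
    show "{2 * a..R} \<subseteq> {a..2 * R - a}" using a by auto
    then show "(\<lambda>t. plateau a R t / bdist R t * Xf (bdist R t / R) powr 1) integrable_on {2 * a..R}"
      by (intro integrable_continuous_interval continuous_on_subset[OF continuous_on_plateau_weights(3)])
    show "(\<lambda>t. plateau a R t / bdist R t * Xf (bdist R t / R) powr 1) integrable_on {a..2 * R - a}"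
      using continuous_on_plateau_weights(3) by (rule integrable_continuous_interval)
    show "\<forall>t\<in>{a..2 * R - a}. 0 \<le> plateau a R t / bdist R t * Xf (bdist R t / R) powr 1"
    proof
      fix t assume "t \<in> {a..2 * R - a}"
      then have "0 < bdist R t" using bdist_bounds[of t] a by linarith
      then show "0 \<le> plateau a R t / bdist R t * Xf (bdist R t / R) powr 1"
        by (simp add: plateau_nonneg)
    qed
  qed
  ultimately show ?thesis by (simp add: integral_unique)
qed

end


lemma plateau_log_integral_large:
  assumes R: "R > 0" and C: "C > 0"
  obtains a where "a > 0" "2 * a \<le> R"
    "1 \<le> C * integral {a..2 * R - a} (\<lambda>t. plateau a R t / bdist R t * Xf (bdist R t / R) powr 1) - 2"
proof
  define a where "a = R / 2 * exp (1 - exp (3 / C + 1))"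
  show a: "a > 0" "2 * a \<le> R" unfolding a_def using R C by auto
  have "ln (1 - ln (2 * a / R)) = 3 / C + 1" unfolding a_def using R by simp
  then have "3 / C + 1 \<le> integral {a..2 * R - a} (\<lambda>t. plateau a R t / bdist R t * Xf (bdist R t / R) powr 1)"
    using plateau_log_integral_ge[OF a] by simp
  then show "1 \<le> C * integral {a..2 * R - a} (\<lambda>t. plateau a R t / bdist R t * Xf (bdist R t / R) powr 1) - 2"
    using C by (simp add: field_simps)
qed

lemma integral_cbox_Pair_mult:
  fixes f :: "'a::euclidean_space \<Rightarrow> real" and g :: "'b::euclidean_space \<Rightarrow> real"
  assumes f: "continuous_on (cbox a b) f" and g: "continuous_on (cbox c d) g"
  shows "integral (cbox (a, c) (b, d)) (\<lambda>x. f (fst x) * g (snd x)) = integral (cbox a b) f * integral (cbox c d) g"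
proof -
  have "continuous_on (cbox (a, c) (b, d)) (\<lambda>x. f (fst x) * g (snd x))"
    by (intro continuous_on_mult continuous_on_compose2[OF f] continuous_on_compose2[OF g] continuous_intros)
       (auto simp: cbox_Pair_iff)
  then have "integral (cbox (a, c) (b, d)) (\<lambda>x. f (fst x) * g (snd x))
      = integral (cbox a b) (\<lambda>y. integral (cbox c d) (\<lambda>t. f y * g t))"
    by (simp add: integral_prod_continuous)
  also have "\<dots> = integral (cbox a b) (\<lambda>y. integral (cbox c d) g * f y)"
    using integral_mult[OF integrable_continuous[OF g]] by (simp add: mult.commute)
  finally show ?thesis using integral_mult[OF integrable_continuous[OF f]] by (simp add: mult.commute)
qed

lemma integral_strip_product:
  fixes h :: "(real^'m) \<times> real \<Rightarrow> real"
  assumes a: "a > 0" "2 * a \<le> R" and f: "continuous_on (cbox p q) f" and g: "continuous_on {a..2 * R - a} g"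
    and inside: "\<And>x. x \<in> cbox (p, a) (q, 2 * R - a) \<Longrightarrow> h x = f (fst x) * g (snd x)"
    and outside: "\<And>x. x \<notin> cbox (p, a) (q, 2 * R - a) \<Longrightarrow> h x = 0"
  shows "h integrable_on strip R" "integral (strip R) h = integral (cbox p q) f * integral {a..2 * R - a} g"
proof -
  have sub: "cbox (p, a) (q, 2 * R - a) \<subseteq> strip R"
    using a by (auto simp: cbox_Pair_iff strip_def)
  have "continuous_on (cbox (p, a) (q, 2 * R - a)) (\<lambda>x. f (fst x) * g (snd x))"
    by (intro continuous_on_mult continuous_on_compose2[OF f] continuous_on_compose2[OF g] continuous_intros)
       (auto simp: cbox_Pair_iff)
  moreover have "continuous_on (cbox (p, a) (q, 2 * R - a)) h
      = continuous_on (cbox (p, a) (q, 2 * R - a)) (\<lambda>x. f (fst x) * g (snd x))"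
    by (rule continuous_on_cong[OF refl inside])
  ultimately have "continuous_on (cbox (p, a) (q, 2 * R - a)) h" by simp
  note h = integrable_on_superset_if_continuous_on_cbox[OF this outside sub]
  show "h integrable_on strip R" by (rule h(1))
  have "integral (cbox (p, a) (q, 2 * R - a)) h
      = integral (cbox (p, a) (q, 2 * R - a)) (\<lambda>x. f (fst x) * g (snd x))"
    using inside by (rule integral_cong)
  then show "integral (strip R) h = integral (cbox p q) f * integral {a..2 * R - a} g"
    using h(2) integral_cbox_Pair_mult[OF f g[folded cbox_interval]] by (simp add: cbox_interval)
qed


definition cube :: "real \<Rightarrow> (real^'m) set" where
  "cube r = cbox (- (\<chi> i. r)) (\<chi> i. r)"

lemma mem_cube_iff: "y \<in> cube r \<longleftrightarrow> (\<forall>i. \<bar>y $ i\<bar> \<le> r)"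
  by (auto simp: cube_def mem_box_cart abs_le_iff minus_le_iff)

lemma content_cube: "r \<ge> 0 \<Longrightarrow> Henstock_Kurzweil_Integration.content (cube r :: (real^'m) set) = (2 * r) ^ CARD('m)"
proof -
  assume "r \<ge> 0"
  then have "(0::real^'m) \<in> cube r" by (simp add: mem_cube_iff)
  then show ?thesis using \<open>r \<ge> 0\<close> unfolding cube_def by (subst content_cbox_cart) auto
qed

lemma cube_mono: "r \<le> r' \<Longrightarrow> cube r \<subseteq> cube r'"
  unfolding mem_cube_iff subset_iff by (meson order_trans)

lemma mem_cube_if_inner_self_le:
  assumes "L > 0" and "(y :: real^'m) \<bullet> y \<le> 2 * L\<^sup>2"
  shows "y \<in> cube (2 * L)"
  unfolding mem_cube_iff
  using component_le_norm_cart[of y] norm_le_if_inner_self_le[OF assms(2,1)] by (meson order_trans)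

lemma cutoff_eq_1_on_cube:
  assumes L: "L > 0" and y: "(y :: real^'m) \<in> cube (L / CARD('m))"
  shows "cutoff L y = 1"
proof -
  have "(y $ i)\<^sup>2 \<le> (L / CARD('m))\<^sup>2" for i
    using y L unfolding mem_cube_iff by (metis abs_le_square_iff abs_of_nonneg divide_nonneg_nonneg
        less_imp_le of_nat_0_le_iff power2_abs)
  then have "y \<bullet> y \<le> (\<Sum>i\<in>(UNIV::'m set). (L / CARD('m))\<^sup>2)"
    unfolding inner_vec_def by (intro sum_mono) (simp add: power2_eq_square)
  also have "\<dots> = L\<^sup>2 / CARD('m)" by (simp add: power2_eq_square)
  also have "\<dots> \<le> L\<^sup>2" by (simp add: divide_le_eq mult_le_cancel_left1)
  finally show ?thesis
    unfolding cutoff_def using L by (intro smooth_step_eq_1) (simp add: field_simps)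
qed

lemma continuous_on_cutoff: "continuous_on S (cutoff L)"
  unfolding cutoff_def divide_inverse
  by (rule continuous_on_compose2[OF continuous_on_smooth_step[of UNIV]]) (auto intro!: continuous_intros)

lemma content_cube_le_integral_cutoff:
  assumes "L > 0"
  shows "Henstock_Kurzweil_Integration.content (cube (L / CARD('m)) :: (real^'m) set)
    \<le> integral (cube (2 * L)) (cutoff L :: real^'m \<Rightarrow> real)"
proof -
  have "L / CARD('m) \<le> L" using assms by (simp add: divide_le_eq mult_le_cancel_left1)
  then have le: "L / CARD('m) \<le> 2 * L" using assms by linarith
  have "integral (cube (L / CARD('m))) (cutoff L :: real^'m \<Rightarrow> real)
      \<le> integral (cube (2 * L)) (cutoff L :: real^'m \<Rightarrow> real)"
  proof (rule Henstock_Kurzweil_Integration.integral_subset_le)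
    show "cube (L / CARD('m)) \<subseteq> (cube (2 * L) :: (real^'m) set)" by (rule cube_mono[OF le])
    show "(cutoff L :: real^'m \<Rightarrow> real) integrable_on cube (L / CARD('m))"
      "(cutoff L :: real^'m \<Rightarrow> real) integrable_on cube (2 * L)"
      unfolding cube_def by (intro integrable_continuous continuous_on_cutoff)+
    show "\<forall>y\<in>cube (2 * L). 0 \<le> cutoff L (y :: real^'m)"
      by (simp add: cutoff_def smooth_step_nonneg)
  qed
  moreover have "integral (cube (L / CARD('m))) (cutoff L :: real^'m \<Rightarrow> real) = integral (cube (L / CARD('m))) (\<lambda>y::real^'m. 1)"
    using cutoff_eq_1_on_cube[OF assms] by (rule integral_cong)
  ultimately show ?thesis unfolding cube_def by simp
qed


lemma content_cube_scale:
  assumes "L > 0"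
  shows "Henstock_Kurzweil_Integration.content (cube (2 * L) :: (real^'m) set)
    = (2 * real CARD('m)) ^ CARD('m) * Henstock_Kurzweil_Integration.content (cube (L / CARD('m)) :: (real^'m) set)"
proof -
  have "Henstock_Kurzweil_Integration.content (cube (2 * L) :: (real^'m) set) = (2 * (2 * L)) ^ CARD('m)"
    using assms by (intro content_cube) simp
  also have "2 * (2 * L) = (2 * real CARD('m)) * (2 * (L / CARD('m)))" by simp
  also have "Henstock_Kurzweil_Integration.content (cube (L / CARD('m)) :: (real^'m) set)
      = (2 * (L / CARD('m))) ^ CARD('m)"
    using assms by (intro content_cube) simp
  ultimately show ?thesis by (simp only: power_mult_distrib)
qed

definition test_box :: "real \<Rightarrow> real \<Rightarrow> real \<Rightarrow> ((real^'m) \<times> real) set" where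
  "test_box L a R = cbox (- (\<chi> i. 2 * L), a) (\<chi> i. 2 * L, 2 * R - a)"

lemma mem_test_box_iff: "x \<in> test_box L a R \<longleftrightarrow> fst x \<in> cube (2 * L) \<and> a \<le> snd x \<and> snd x \<le> 2 * R - a"
  unfolding test_box_def cube_def by (cases x) (simp add: cbox_Pair_iff)

lemma test_fun_outside_test_box:
  fixes x :: "(real^'m) \<times> real"
  assumes a: "a > 0" and L: "L > 0" and x: "x \<notin> test_box L a R"
  shows "test_fun L a R x = 0 \<and> grad (test_fun L a R) x = 0"
proof -
  define K where "K = {x :: (real^'m) \<times> real. fst x \<bullet> fst x \<le> 2 * L\<^sup>2 \<and> a \<le> snd x \<and> snd x \<le> 2 * R - a}"
  have "closed K" unfolding K_def by (intro closed_Collect_conj closed_Collect_le continuous_intros)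
  have vanish: "test_fun L a R y = 0" if "y \<notin> K" for y
    using that unfolding K_def by (intro test_fun_eq_0[OF a L]) auto
  have "K \<subseteq> test_box L a R" using mem_cube_if_inner_self_le[OF L] by (auto simp: K_def mem_test_box_iff)
  then have "x \<in> - K" using x by blast
  then show ?thesis
    using vanish \<open>closed K\<close> by (auto intro!: grad_eq_0_if_vanishing_near[of "- K"])
qed

lemma test_fun_in_test_box:
  fixes x :: "(real^'m) \<times> real"
  assumes a: "a > 0" "2 * a \<le> R" and x: "x \<in> test_box L a R"
  shows "dS R x = bdist R (snd x) \<and> \<bar>test_fun L a R x\<bar> = cutoff L (fst x) * plateau a R (snd x)"
  using x a dS_eq_bdist[of x R]
  by (auto simp: mem_test_box_iff strip_def test_fun_def cutoff_def abs_mult smooth_step_nonneg plateau_nonneg)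

lemma integral_grad_test_fun_le:
  assumes a: "a > 0" "2 * a \<le> R" and L: "L > 0" and M: "\<And>t. smooth_step' t \<le> M"
  shows "integral (strip R) (\<lambda>x. norm (grad (test_fun L a R :: (real^'m) \<times> real \<Rightarrow> real) x) / dS R x powr (s - 1))
    \<le> 4 * M / L * Henstock_Kurzweil_Integration.content (cube (2 * L) :: (real^'m) set)
        * integral {a..2 * R - a} (\<lambda>t. plateau a R t / bdist R t powr (s - 1))
      + integral (cube (2 * L)) (cutoff L :: real^'m \<Rightarrow> real)
        * integral {a..2 * R - a} (\<lambda>t. \<bar>plateau' a R t\<bar> / bdist R t powr (s - 1))"
proof -
  define u :: "(real^'m) \<times> real \<Rightarrow> real" where "u = test_fun L a R"
  define B :: "((real^'m) \<times> real) set" where "B = test_box L a R"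
  define g where "g x = norm (grad u x) / dS R x powr (s - 1)" for x
  define h1 where "h1 x = (if x \<in> B then 4 * M / L * (plateau a R (snd x) / bdist R (snd x) powr (s - 1)) else 0)"
    for x
  define h2 where "h2 x = (if x \<in> B then cutoff L (fst x) * (\<bar>plateau' a R (snd x)\<bar> / bdist R (snd x) powr (s - 1))
    else 0)" for x
  note weights = continuous_on_plateau_weights[OF a]
  have h1: "h1 integrable_on strip R"
    "integral (strip R) h1 = integral (cube (2 * L)) (\<lambda>y::real^'m. 4 * M / L)
      * integral {a..2 * R - a} (\<lambda>t. plateau a R t / bdist R t powr (s - 1))"
    unfolding cube_def
    by (rule integral_strip_product[where h=h1 and p="- (\<chi> i. 2 * L)" and q="\<chi> i. 2 * L"
          and f="\<lambda>y. 4 * M / L" and g="\<lambda>t. plateau a R t / bdist R t powr (s - 1)",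
          OF a continuous_on_const weights(1)]; simp add: h1_def B_def test_box_def)+
  have h2: "h2 integrable_on strip R" "integral (strip R) h2 = integral (cube (2 * L)) (cutoff L :: real^'m \<Rightarrow> real)
      * integral {a..2 * R - a} (\<lambda>t. \<bar>plateau' a R t\<bar> / bdist R t powr (s - 1))"
    unfolding cube_def
    by (rule integral_strip_product[where h=h2 and p="- (\<chi> i. 2 * L)" and q="\<chi> i. 2 * L"
          and f="cutoff L" and g="\<lambda>t. \<bar>plateau' a R t\<bar> / bdist R t powr (s - 1)",
          OF a continuous_on_cutoff weights(2)]; simp add: h2_def B_def test_box_def)+
  have pos: "0 < dS R x" if "x \<in> B" for x
    using that test_fun_in_test_box[OF a, of x] a by (auto simp: B_def mem_test_box_iff bdist_def)
  then have "\<forall>x\<in>B. dS R x powr (s - 1) \<noteq> 0" by (metis less_irrefl powr_eq_0_iff)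
  then have "continuous_on B g"
    unfolding g_def u_def
    by (intro continuous_intros continuous_on_subset[OF continuous_on_grad[OF Ck_on_test_fun]]
        continuous_on_dS) auto
  then have "g integrable_on strip R"
    unfolding B_def test_box_def
  proof (rule integrable_on_superset_if_continuous_on_cbox(1))
    show "g x = 0" if "x \<notin> cbox (- (\<chi> i. 2 * L), a) (\<chi> i. 2 * L, 2 * R - a)" for x
      using test_fun_outside_test_box[OF a(1) L, of x R] that by (simp add: g_def u_def test_box_def)
    show "cbox (- (\<chi> i. 2 * L), a) (\<chi> i. 2 * L, 2 * R - a) \<subseteq> strip R"
      using a by (auto simp: cbox_Pair_iff strip_def)
  qed
  then have "integral (strip R) g \<le> integral (strip R) (\<lambda>x. h1 x + h2 x)"
  proof (rule integral_le[OF _ integrable_add[OF h1(1) h2(1)]])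
    fix x
    show "g x \<le> h1 x + h2 x"
    proof (cases "x \<in> B")
      case True
      have d: "dS R x = bdist R (snd x)" "0 < dS R x powr (s - 1)"
        using test_fun_in_test_box[OF a, of x] pos[OF True] True by (auto simp: B_def)
      have "g x \<le> (4 * M / L * plateau a R (snd x) + cutoff L (fst x) * \<bar>plateau' a R (snd x)\<bar>)
          / dS R x powr (s - 1)"
        using norm_grad_test_fun_le[OF a(1) L M, where x=x and R=R] d(2) unfolding g_def u_def
        by (intro divide_right_mono) auto
      then show ?thesis
        unfolding h1_def h2_def using True d(1) by (simp add: add_divide_distrib)
    qed (use test_fun_outside_test_box[OF a(1) L, of x R] in \<open>simp add: g_def u_def h1_def h2_def B_def\<close>)
  qed
  also have "\<dots> = integral (strip R) h1 + integral (strip R) h2"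
    by (rule Henstock_Kurzweil_Integration.integral_add[OF h1(1) h2(1)])
  finally show ?thesis
    using h1(2) h2(2) unfolding g_def u_def cube_def by (simp add: mult_ac)
qed

lemma test_fun_hardy_estimate:
  fixes R s C L a M :: real
  assumes R: "R > 0" and a: "a > 0" "2 * a \<le> R" and L: "L > 0"
    and M: "\<And>t. smooth_step' t \<le> M"
    and ineq: "ineqD R s 1 C (test_fun L a R :: (real^'m) \<times> real \<Rightarrow> real)"
  shows "integral (cube (2 * L)) (cutoff L :: real^'m \<Rightarrow> real)
      * (C * integral {a..2 * R - a} (\<lambda>t. plateau a R t / bdist R t * Xf (bdist R t / R) powr 1) - 2)
    \<le> 4 * M / L * Henstock_Kurzweil_Integration.content (cube (2 * L) :: (real^'m) set)
      * integral {a..2 * R - a} (\<lambda>t. plateau a R t / bdist R t powr (s - 1)) * R powr (s - 1)"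
proof -
  define u :: "(real^'m) \<times> real \<Rightarrow> real" where "u = test_fun L a R"
  define \<Phi> where "\<Phi> = integral (cube (2 * L)) (cutoff L :: real^'m \<Rightarrow> real)"
  define P' where "P' = integral {a..2 * R - a} (\<lambda>t. \<bar>plateau' a R t\<bar> / bdist R t powr (s - 1))"
  define A where "A = integral {a..2 * R - a} (\<lambda>t. plateau a R t / bdist R t powr s)"
  define X where "X = integral {a..2 * R - a} (\<lambda>t. plateau a R t / bdist R t * Xf (bdist R t / R) powr 1)"
  define E where "E = 4 * M / L * Henstock_Kurzweil_Integration.content (cube (2 * L) :: (real^'m) set)
    * integral {a..2 * R - a} (\<lambda>t. plateau a R t / bdist R t powr (s - 1))"
  define \<rho> where "\<rho> = R powr (s - 1)"
  note weights = continuous_on_plateau_weights[OF a]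
  note inside = test_fun_in_test_box[OF a] and outside = test_fun_outside_test_box[OF a(1) L]
  have I2: "integral (strip R) (\<lambda>x. \<bar>u x\<bar> / dS R x powr s) = \<Phi> * A"
    unfolding \<Phi>_def A_def cube_def
    by (rule integral_strip_product(2)[OF a continuous_on_cutoff weights(1)])
       (auto simp: inside outside u_def test_box_def[symmetric])
  have I3: "integral (strip R) (\<lambda>x. \<bar>u x\<bar> / dS R x * Xf (dS R x / R) powr 1) = \<Phi> * X"
    unfolding \<Phi>_def X_def cube_def
    by (rule integral_strip_product(2)[OF a continuous_on_cutoff weights(3)])
       (auto simp: inside outside u_def test_box_def[symmetric])
  have \<rho>: "\<rho> > 0" "R powr (1 - s) * \<rho> = 1"
    using R unfolding \<rho>_def by (simp_all flip: powr_add)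
  have I1: "integral (strip R) (\<lambda>x. norm (grad u x) / dS R x powr (s - 1)) \<le> E + \<Phi> * P'"
    unfolding u_def E_def \<Phi>_def P'_def by (rule integral_grad_test_fun_le[OF a L M])
  have "(s - 1) * (\<Phi> * A) + C / \<rho> * (\<Phi> * X) \<le> E + \<Phi> * P'"
    using ineq I1 unfolding ineqD_def u_def[symmetric] I2 I3 \<rho>_def by linarith
  then have "((s - 1) * (\<Phi> * A) + C / \<rho> * (\<Phi> * X)) * \<rho> \<le> (E + \<Phi> * P') * \<rho>"
    using \<rho>(1) by (simp add: mult_right_mono)
  then have "C * (\<Phi> * X) \<le> E * \<rho> + \<Phi> * \<rho> * (P' - (s - 1) * A)"
    using \<rho>(1) by (simp add: algebra_simps)
  also have "P' - (s - 1) * A = 2 * R powr (1 - s)"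
    unfolding P'_def A_def by (rule plateau_hardy_identity[OF a])
  also have "\<Phi> * \<rho> * (2 * R powr (1 - s)) = 2 * \<Phi> * (R powr (1 - s) * \<rho>)"
    by (simp add: algebra_simps)
  finally have "C * (\<Phi> * X) \<le> E * \<rho> + 2 * \<Phi>"
    using \<rho>(2) by simp
  then show ?thesis
    unfolding \<Phi>_def[symmetric] X_def[symmetric] E_def[symmetric] \<rho>_def[symmetric]
    by (simp add: algebra_simps)
qed

lemma no_hardy_remainder_gamma_one:
  fixes R s C :: real
  assumes R: "R > 0" and C: "C > 0"
  shows "\<not> (\<forall>u\<in>(Cc_inf R :: ((real^'m) \<times> real \<Rightarrow> real) set). ineqD R s 1 C u)"
proof
  assume H: "\<forall>u\<in>(Cc_inf R :: ((real^'m) \<times> real \<Rightarrow> real) set). ineqD R s 1 C u"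
  obtain M where M: "\<And>t. smooth_step' t \<le> M" using smooth_step'_bounded by blast
  then have "M \<ge> 0" using smooth_step'_nonneg[of 0] order_trans by blast
  obtain a where a: "a > 0" "2 * a \<le> R"
    and CX: "1 \<le> C * integral {a..2 * R - a} (\<lambda>t. plateau a R t / bdist R t * Xf (bdist R t / R) powr 1) - 2"
    using plateau_log_integral_large[OF R C] by blast
  define K where "K = 4 * M * (2 * real CARD('m)) ^ CARD('m)
    * integral {a..2 * R - a} (\<lambda>t. plateau a R t / bdist R t powr (s - 1)) * R powr (s - 1)"
  define L where "L = K + 1"
  have L: "L > 0"
    unfolding L_def K_def using \<open>M \<ge> 0\<close> plateau_weight_integral_nonneg[OF a] by (simp add: add_nonneg_pos)
  define V where "V = Henstock_Kurzweil_Integration.content (cube (L / CARD('m)) :: (real^'m) set)"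
  have V: "V > 0" unfolding V_def using L by (simp add: content_cube)
  define \<Phi> where "\<Phi> = integral (cube (2 * L)) (cutoff L :: real^'m \<Rightarrow> real)"
  have "ineqD R s 1 C (test_fun L a R :: (real^'m) \<times> real \<Rightarrow> real)"
    using H test_fun_in_Cc_inf[OF a(1) L] by blast
  note estimate = test_fun_hardy_estimate[OF R a L M this, unfolded content_cube_scale[OF L]]
  have "V \<le> \<Phi>" unfolding V_def \<Phi>_def by (rule content_cube_le_integral_cutoff[OF L])
  also have "\<dots> \<le> \<Phi> * (C * integral {a..2 * R - a} (\<lambda>t. plateau a R t / bdist R t * Xf (bdist R t / R) powr 1) - 2)"
    using CX \<open>V \<le> \<Phi>\<close> V by (simp add: mult_le_cancel_left1)
  also have "\<dots> \<le> K * V / L"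
    using estimate unfolding \<Phi>_def[symmetric] V_def[symmetric] K_def by (simp add: field_simps)
  finally have "L * V \<le> K * V" using L by (simp add: field_simps)
  then show False using V unfolding L_def by (simp add: algebra_simps)
qed

theorem theoremD:
  fixes R s \<gamma> :: real
  assumes "R > 0" and "s \<ge> 1"
  shows "(\<gamma> > 1 \<longrightarrow> (\<exists>C\<ge>\<gamma> - 1. \<forall>u\<in>(Cc_inf R :: ((real^'m) \<times> real \<Rightarrow> real) set).
              ineqD R s \<gamma> C u))
       \<and> \<not> (\<exists>C>0. \<forall>u\<in>(Cc_inf R :: ((real^'m) \<times> real \<Rightarrow> real) set). ineqD R s 1 C u)"
proof
  show "\<gamma> > 1 \<longrightarrow> (\<exists>C\<ge>\<gamma> - 1. \<forall>u\<in>(Cc_inf R :: ((real^'m) \<times> real \<Rightarrow> real) set). ineqD R s \<gamma> C u)"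
    by (intro impI exI[of _ "\<gamma> - 1"]) (auto intro: hardy_strip[OF assms])
  show "\<not> (\<exists>C>0. \<forall>u\<in>(Cc_inf R :: ((real^'m) \<times> real \<Rightarrow> real) set). ineqD R s 1 C u)"
    using no_hardy_remainder_gamma_one[OF assms(1)] by blast
qed

end
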